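(* Let $\mathcal M$ be a time-dependent finite-horizon MDP accessed through a quantum generative model $\mathcal G$, and let $\epsilon\in(0,\sqrt H]$ and $\delta\in(0,1)$. Run the algorithm QVI-4$(\mathcal M,\epsilon,\delta)$ described in the context. Then, with probability at least $1-\delta$, its outputs satisfy, for all $h\in[H]$ (componentwise), $V_h^*-\epsilon\le\hat V_h\le V_h^{\hat\pi}\le V_h^*$ and $Q_h^*-\epsilon\le\hat Q_h\le Q_h^{\hat\pi}\le Q_h^*$.
   Context: Write $[H]=\{0,\dots,H-1\}$. The MDP $\mathcal M=(\mathcal S,\mathcal A,\{P_h\},\{r_h\},H)$ has finite $\mathcal S,\mathcal A$ with $S=|\mathcal S|$ and $A=|\mathcal A|$, known rewards $r_h(s,a)\in[0,1]$, and transitions $P_h(\cdot\mid s,a)$. Write $P_{h|s,a}=(P_h(s'\mid s,a))_{s'}$. A policy is $\pi:\mathcal S\times[H]\to\mathcal A$. Value functions: - $V_h^\pi(s)=\mathbb E[\sum_{t=h}^{H-1}r_t(s_t,a_t)\mid s_h=s]$, with $a_t=\pi(s_t,t)$ and $s_{t+1}\sim P_t(\cdot\mid s_t,a_t)$. - $Q_h^\pi(s,a)$ is defined the same way but with $a_h=a$, so $Q_h^\pi(s,a)=r_h(s,a)+P_{h|s,a}^{\mathrm T}V^\pi_{h+1}$, with $V_H^\pi=0$. - $V_h^*=\max_\pi V_h^\pi$ and $Q_h^*=\max_\pi Q_h^\pi$. The quantum generative model is the unitary $\mathcal G:|s\rangle|a\rangle|h\rangle|0\rangle|0\rangle\mapsto|s\rangle|a\rangle|h\rangle\sum_{s'}\sqrt{P_h(s'\mid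 s,a)}|s'\rangle|j_{s'}\rangle$, with arbitrary auxiliary states $|j_{s'}\rangle$. Subroutines (both estimate $p^{\mathrm T}f$, given $U_p:|0\rangle|0\rangle\mapsto\sum_x\sqrt{p_x}|x\rangle|j_x\rangle$, here $\mathcal G$ at $(s,a,h)$, and a binary oracle for $f$): - QME1$_\zeta(p^{\mathrm T}f,\eta)$: assumes $0\le f\le u$ for a supplied $u$. Returns an estimate with error less than $\eta$ with probability greater than $1-\zeta$, using $O((u/\eta+\sqrt{u/\eta})\log(1/\zeta))$ queries. - QME2$_\zeta(p^{\mathrm T}f,\eta)$: assumes $\mathrm{Var}_{x\sim p}f(x)\le\sigma^2$ for a supplied $\sigma$ with $\eta\in(0,4\sigma)$. Returns an estimate with error less than $\eta$ with probability greater than $1-\zeta$, using $O((\sigma/\eta)\log^2(\sigma/\eta)\log(1/\zeta))$ queries. Algorithm QVI-4$(\mathcal M,\epsilon,\delta)$: - Set $K=\lceil\log_2(H/\epsilon)\rceil+1$, $\zeta=\delta/(4KHSA)$, $c=0.001$, $b=1$. - Set $V^{(0)}_{0,h}=\mathbf 0$ for all $h$, and let $\pi^{(0)}_0(s,h)$ be arbitrary actions. - For $k=0,\dots,K-1$: - Set $\epsilon_k=H/2^k$, $V_{k,H}=\mathbf 0$, $V^{(0)}_{k,H}=\mathbf 0$. - For all $(s,a,h)$: set $y_{k,h}(s,a)=\max\{\mathrm{QME1}_\zeta(P_{h|s,a}^{\mathrm T}(V^{(0)}_{k,h+1})^2,b)-(\mathrm{QME1}_\zeta(P_{h|s,a}^{\mathrm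 T}V^{(0)}_{k,h+1},b/H))^2,\,0\}$, with range bounds $u=H^2$ and $u=H$ respectively. - For all $(s,a,h)$: with $\eta_{k,h}(s,a)=c\epsilon H^{-1.5}\sqrt{y_{k,h}(s,a)+4b}$, set $x_{k,h}(s,a)=\mathrm{QME2}_\zeta(P_{h|s,a}^{\mathrm T}V^{(0)}_{k,h+1},\eta_{k,h}(s,a))-\eta_{k,h}(s,a)$, with variance bound $\sigma^2=y_{k,h}(s,a)+4b$. - For $h=H-1,\dots,0$: - For all $(s,a)$: set $g_{k,h}(s,a)=\mathrm{QME1}_\zeta(P_{h|s,a}^{\mathrm T}(V_{k,h+1}-V^{(0)}_{k,h+1}),c\epsilon_k/H)-c\epsilon_k/H$, with $u=2\epsilon_k$. - Set $Q_{k,h}(s,a)=\max\{r_h(s,a)+x_{k,h}(s,a)+g_{k,h}(s,a),0\}$. - Set $V_{k,h}(s)=\max_aQ_{k,h}(s,a)$ and $\pi_k(s,h)=\arg\max_aQ_{k,h}(s,a)$. - If $\max_aQ_{k,h}(s,a)\le V^{(0)}_{k,h}(s)$, reset $V_{k,h}(s)=V^{(0)}_{k,h}(s)$ and $\pi_k(s,h)=\pi^{(0)}_k(s,h)$. - Set $V^{(0)}_{k+1,h}=V_{k,h}$ and $\pi^{(0)}_{k+1}(\cdot,h)=\pi_k(\cdot,h)$ for all $h$. - Return $\hat\pi=\pi_{K-1}$, $\hat V_h=V_{K-1,h}$, $\hat Q_h=Q_{K-1,h}$. *)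

theory Defs
  imports "HOL-Analysis.Analysis" "HOL-Probability.Probability"
begin

text \<open>Transitions P h s a :: 's pmf (so P_{h|s,a} = pmf (P h s a)), rewards r h s a.
  Policies are maps pi :: 's => nat => 'a (state, time step).\<close>

definition pexp :: "'s::finite pmf \<Rightarrow> ('s \<Rightarrow> real) \<Rightarrow> real" where
  "pexp p f = (\<Sum>x\<in>UNIV. pmf p x * f x)"

definition pvar :: "'s::finite pmf \<Rightarrow> ('s \<Rightarrow> real) \<Rightarrow> real" where
  "pvar p f = (\<Sum>x\<in>UNIV. pmf p x * (f x - pexp p f)\<^sup>2)"

function Vpi :: "(nat \<Rightarrow> 's::finite \<Rightarrow> 'a \<Rightarrow> 's pmf) \<Rightarrow> (nat \<Rightarrow> 's \<Rightarrow> 'a \<Rightarrow> real) \<Rightarrow> nat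
    \<Rightarrow> ('s \<Rightarrow> nat \<Rightarrow> 'a) \<Rightarrow> nat \<Rightarrow> 's \<Rightarrow> real" where
  "Vpi P r H pol h s =
     (if h < H then r h s (pol s h) + (\<Sum>s'\<in>UNIV. pmf (P h s (pol s h)) s' * Vpi P r H pol (Suc h) s')
      else 0)"
  by pat_completeness auto
termination
  by (relation "Wellfounded.measure (\<lambda>(P,r,H,pol,h,s). H - h)") auto

declare Vpi.simps[simp del]

definition Qpi :: "(nat \<Rightarrow> 's::finite \<Rightarrow> 'a \<Rightarrow> 's pmf) \<Rightarrow> (nat \<Rightarrow> 's \<Rightarrow> 'a \<Rightarrow> real) \<Rightarrow> nat
    \<Rightarrow> ('s \<Rightarrow> nat \<Rightarrow> 'a) \<Rightarrow> nat \<Rightarrow> 's \<Rightarrow> 'a \<Rightarrow> real" where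
  "Qpi P r H pol h s a = r h s a + (\<Sum>s'\<in>UNIV. pmf (P h s a) s' * Vpi P r H pol (Suc h) s')"

definition Vstar :: "(nat \<Rightarrow> 's::finite \<Rightarrow> 'a \<Rightarrow> 's pmf) \<Rightarrow> (nat \<Rightarrow> 's \<Rightarrow> 'a \<Rightarrow> real) \<Rightarrow> nat
    \<Rightarrow> nat \<Rightarrow> 's \<Rightarrow> real" where
  "Vstar P r H h s = (SUP pol. Vpi P r H pol h s)"

definition Qstar :: "(nat \<Rightarrow> 's::finite \<Rightarrow> 'a \<Rightarrow> 's pmf) \<Rightarrow> (nat \<Rightarrow> 's \<Rightarrow> 'a \<Rightarrow> real) \<Rightarrow> nat
    \<Rightarrow> nat \<Rightarrow> 's \<Rightarrow> 'a \<Rightarrow> real" where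
  "Qstar P r H h s a = (SUP pol. Qpi P r H pol h s a)"

text \<open>An oracle takes the distribution p (accessed in reality through the quantum generative
  model at (s,a,h)), the function f, the supplied bound (u resp. sigma), the accuracy eta and
  the failure probability zeta, and returns a distribution of estimates.\<close>

type_synonym 's qme = "'s pmf \<Rightarrow> ('s \<Rightarrow> real) \<Rightarrow> real \<Rightarrow> real \<Rightarrow> real \<Rightarrow> real pmf"

definition QME1_spec :: "'s::finite qme \<Rightarrow> bool" where
  "QME1_spec qme1 \<longleftrightarrow>
     (\<forall>p f u \<eta> \<zeta>. (\<forall>x. 0 \<le> f x \<and> f x \<le> u) \<longrightarrow> 0 < \<eta> \<longrightarrow> 0 < \<zeta> \<longrightarrow>
        measure_pmf.prob (qme1 p f u \<eta> \<zeta>) {e. \<bar>e - pexp p f\<bar> < \<eta>} > 1 - \<zeta>)"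

definition QME2_spec :: "'s::finite qme \<Rightarrow> bool" where
  "QME2_spec qme2 \<longleftrightarrow>
     (\<forall>p f \<sigma> \<eta> \<zeta>. pvar p f \<le> \<sigma>\<^sup>2 \<longrightarrow> 0 < \<eta> \<longrightarrow> \<eta> < 4 * \<sigma> \<longrightarrow> 0 < \<zeta> \<longrightarrow>
        measure_pmf.prob (qme2 p f \<sigma> \<eta> \<zeta>) {e. \<bar>e - pexp p f\<bar> < \<eta>} > 1 - \<zeta>)"

definition qvi_c :: real where "qvi_c = 0.001"
definition qvi_b :: real where "qvi_b = 1"

definition qvi_K :: "nat \<Rightarrow> real \<Rightarrow> nat" where
  "qvi_K H \<epsilon> = nat \<lceil>log 2 (real H / \<epsilon>)\<rceil> + 1"

definition qvi_zeta :: "'s::finite itself \<Rightarrow> 'a::finite itself \<Rightarrow> nat \<Rightarrow> real \<Rightarrow> real \<Rightarrow> real" where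
  "qvi_zeta _ _ H \<epsilon> \<delta> =
     \<delta> / (4 * real (qvi_K H \<epsilon>) * real H * real CARD('s) * real CARD('a))"

type_synonym ('s,'a) qstate = "(nat \<Rightarrow> 's \<Rightarrow> real) \<times> ('s \<Rightarrow> nat \<Rightarrow> 'a) \<times> (nat \<Rightarrow> 's \<Rightarrow> 'a \<Rightarrow> real)"

text \<open>One step h of the backward loop in outer iteration k. V0, pi0 are V^{(0)}_k, pi^{(0)}_k;
  x is x_k; the state carries V_k, pi_k, Q_k computed so far (for indices > h).\<close>

definition qvi_step ::
  "'s::finite qme \<Rightarrow> (nat \<Rightarrow> 's \<Rightarrow> 'a::finite \<Rightarrow> 's pmf) \<Rightarrow> (nat \<Rightarrow> 's \<Rightarrow> 'a \<Rightarrow> real) \<Rightarrow> nat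
    \<Rightarrow> real \<Rightarrow> real \<Rightarrow> (nat \<Rightarrow> 's \<Rightarrow> real) \<Rightarrow> ('s \<Rightarrow> nat \<Rightarrow> 'a)
    \<Rightarrow> ('s \<times> 'a \<times> nat \<Rightarrow> real) \<Rightarrow> nat \<Rightarrow> ('s,'a) qstate \<Rightarrow> ('s,'a) qstate pmf" where
  "qvi_step qme1 P r H \<epsilon>k \<zeta> V0 pi0 x h st =
     (case st of (V, pol, Q) \<Rightarrow>
      do {
        G \<leftarrow> Pi_pmf UNIV 0 (\<lambda>(s,a). qme1 (P h s a) (\<lambda>s'. V (Suc h) s' - V0 (Suc h) s')
                                    (2 * \<epsilon>k) (qvi_c * \<epsilon>k / real H) \<zeta>);
        let g = (\<lambda>s a. G (s,a) - qvi_c * \<epsilon>k / real H);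
        let Qh = (\<lambda>s a. max (r h s a + x (s,a,h) + g s a) 0);
        let Vm = (\<lambda>s. Max (range (Qh s)));
        let am = (\<lambda>s. SOME a. \<forall>a'. Qh s a' \<le> Qh s a);
        let Vh = (\<lambda>s. if Vm s \<le> V0 h s then V0 h s else Vm s);
        let ph = (\<lambda>s. if Vm s \<le> V0 h s then pi0 s h else am s);
        return_pmf (V(h := Vh), (\<lambda>s t. if t = h then ph s else pol s t), Q(h := Qh))
      })"

text \<open>One outer iteration k: input (V^{(0)}_k, pi^{(0)}_k, _), output (V_k, pi_k, Q_k)
  = (V^{(0)}_{k+1}, pi^{(0)}_{k+1}, Q_k).  V_k H = 0 is maintained.\<close>

definition qvi_iter ::
  "'s::finite qme \<Rightarrow> 's qme \<Rightarrow> (nat \<Rightarrow> 's \<Rightarrow> 'a::finite \<Rightarrow> 's pmf) \<Rightarrow> (nat \<Rightarrow> 's \<Rightarrow> 'a \<Rightarrow> real)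
    \<Rightarrow> nat \<Rightarrow> real \<Rightarrow> real \<Rightarrow> nat \<Rightarrow> ('s,'a) qstate \<Rightarrow> ('s,'a) qstate pmf" where
  "qvi_iter qme1 qme2 P r H \<epsilon> \<zeta> k st =
     (case st of (V0, pi0, _) \<Rightarrow>
      do {
        let \<epsilon>k = real H / 2 ^ k;
        let I = (UNIV :: 's set) \<times> (UNIV :: 'a set) \<times> {..<H};
        E2 \<leftarrow> Pi_pmf I 0 (\<lambda>(s,a,h). qme1 (P h s a) (\<lambda>s'. (V0 (Suc h) s')\<^sup>2)
                              ((real H)\<^sup>2) qvi_b \<zeta>);
        E1 \<leftarrow> Pi_pmf I 0 (\<lambda>(s,a,h). qme1 (P h s a) (V0 (Suc h)) (real H) (qvi_b / real H) \<zeta>);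
        let y = (\<lambda>i. max (E2 i - (E1 i)\<^sup>2) 0);
        let \<eta> = (\<lambda>i. qvi_c * \<epsilon> * real H powr (-1.5) * sqrt (y i + 4 * qvi_b));
        X \<leftarrow> Pi_pmf I 0 (\<lambda>(s,a,h). qme2 (P h s a) (V0 (Suc h))
                              (sqrt (y (s,a,h) + 4 * qvi_b)) (\<eta> (s,a,h)) \<zeta>);
        let x = (\<lambda>i. X i - \<eta> i);
        foldl (\<lambda>M h. M \<bind> qvi_step qme1 P r H \<epsilon>k \<zeta> V0 pi0 x h)
              (return_pmf ((\<lambda>_ _. 0), pi0, (\<lambda>_ _ _. 0)))
              (rev [0..<H])
      })"

text \<open>QVI-4: returns the distribution of (hat V, hat pi, hat Q) = (V_{K-1}, pi_{K-1}, Q_{K-1}).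
  pi_init is the arbitrary initial policy pi^{(0)}_0.\<close>

definition QVI4 ::
  "'s::finite qme \<Rightarrow> 's qme \<Rightarrow> (nat \<Rightarrow> 's \<Rightarrow> 'a::finite \<Rightarrow> 's pmf) \<Rightarrow> (nat \<Rightarrow> 's \<Rightarrow> 'a \<Rightarrow> real)
    \<Rightarrow> nat \<Rightarrow> ('s \<Rightarrow> nat \<Rightarrow> 'a) \<Rightarrow> real \<Rightarrow> real \<Rightarrow> ('s,'a) qstate pmf" where
  "QVI4 qme1 qme2 P r H pi_init \<epsilon> \<delta> =
     (let \<zeta> = qvi_zeta TYPE('s) TYPE('a) H \<epsilon> \<delta> in
      foldl (\<lambda>M k. M \<bind> qvi_iter qme1 qme2 P r H \<epsilon> \<zeta> k)
            (return_pmf ((\<lambda>_ _. 0), pi_init, (\<lambda>_ _ _. 0)))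
            [0..<qvi_K H \<epsilon>])"

end

theory Submission
  imports Defs
begin

(* Each outer iteration k starts from a reference V0 that is a sub-solution of the Bellman
   equation of its policy (hence V0 <= Vpi <= Vstar) and lies within eps_k = H / 2^k of Vstar.
   If every quantum mean estimate of the iteration succeeds, the backward sweep produces a new
   sub-solution V >= V0 whose Q-values fall below the Bellman backup of V by at most
   e = 2 eta + 2 c eps_k / H, where the variance estimate makes eta of order
   c eps H^(-3/2) (sqrt (Var Vstar) + eps_k + 1).  Summed along an optimal trajectory, the law
   of total variance bounds the standard deviations by H^(3/2) in total, so the gap to Vstar
   halves.  After K iterations it is at most eps/2, and a union bound over the 4 K H S A
   estimator calls, each failing with probability zeta, gives total failure probability delta. *)

section \<open>Failure probabilities of composed distributions\<close>

lemma measure_pmf_prob_Collect_not: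
  "measure_pmf.prob p {x. \<not> Q x} = 1 - measure_pmf.prob p {x. Q x}"
proof -
  have "{x. \<not> Q x} = space (measure_pmf p) - {x. Q x}" by auto
  then show ?thesis using measure_pmf.prob_compl[of "{x. Q x}" p] by simp
qed

lemma prob_return_failure: "B x \<Longrightarrow> measure_pmf.prob (return_pmf x) {y. \<not> B y} = 0"
  by (simp add: measure_return)

lemma prob_bind_failure_le:
  fixes M :: "'x pmf" and f :: "'x \<Rightarrow> 'y pmf"
  assumes A: "measure_pmf.prob M {x. \<not> A x} \<le> a"
    and B: "\<And>x. x \<in> set_pmf M \<Longrightarrow> A x \<Longrightarrow> measure_pmf.prob (f x) {y. \<not> B y} \<le> b"
    and b: "0 \<le> b"
  shows "measure_pmf.prob (M \<bind> f) {y. \<not> B y} \<le> a + b"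
proof -
  have "emeasure (measure_pmf (M \<bind> f)) {y. \<not> B y} = (\<integral>\<^sup>+x. emeasure (f x) {y. \<not> B y} \<partial>M)"
    by simp
  also have "\<dots> \<le> (\<integral>\<^sup>+x. (indicator {x. \<not> A x} x + ennreal b) \<partial>M)"
  proof (intro nn_integral_mono_AE AE_pmfI)
    fix x assume x: "x \<in> set_pmf M"
    show "emeasure (f x) {y. \<not> B y} \<le> indicator {x. \<not> A x} x + ennreal b"
    proof (cases "A x")
      case True
      then show ?thesis
        using B[OF x] by (simp add: measure_pmf.emeasure_eq_measure ennreal_leI)
    next
      case False
      have "emeasure (f x) {y. \<not> B y} \<le> 1"
        by (simp add: measure_pmf.emeasure_eq_measure)
      then show ?thesis using False by (simp add: add_increasing2)
    qed
  qed
  also have "\<dots> = ennreal (measure_pmf.prob M {x. \<not> A x} + b)"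
    by (subst nn_integral_add) (auto simp: measure_pmf.emeasure_eq_measure b)
  finally have "ennreal (measure_pmf.prob (M \<bind> f) {y. \<not> B y})
      \<le> ennreal (measure_pmf.prob M {x. \<not> A x} + b)"
    by (simp add: measure_pmf.emeasure_eq_measure del: ennreal_plus)
  then have "measure_pmf.prob (M \<bind> f) {y. \<not> B y} \<le> measure_pmf.prob M {x. \<not> A x} + b"
    by (subst (asm) ennreal_le_iff) (simp_all add: b)
  then show ?thesis using A by linarith
qed

lemma prob_foldl_bind_failure_le:
  fixes f :: "'i \<Rightarrow> 'x \<Rightarrow> 'x pmf" and b :: real
  assumes step: "\<And>j x. j < length xs \<Longrightarrow> Inv j x \<Longrightarrow>
      measure_pmf.prob (f (xs ! j) x) {y. \<not> Inv (Suc j) y} \<le> b"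
    and init: "Inv 0 x0" and b: "0 \<le> b"
  shows "measure_pmf.prob (foldl (\<lambda>M i. M \<bind> f i) (return_pmf x0) xs) {y. \<not> Inv (length xs) y}
           \<le> real (length xs) * b"
  using step
proof (induction xs rule: rev_induct)
  case Nil
  then show ?case using init by (simp add: prob_return_failure)
next
  case (snoc i xs)
  have IH: "measure_pmf.prob (foldl (\<lambda>M i. M \<bind> f i) (return_pmf x0) xs) {y. \<not> Inv (length xs) y}
              \<le> real (length xs) * b"
  proof (rule snoc.IH)
    fix j x assume "j < length xs" "Inv j x"
    then show "measure_pmf.prob (f (xs ! j) x) {y. \<not> Inv (Suc j) y} \<le> b"
      using snoc.prems[of j x] by (simp add: nth_append)
  qed
  have "measure_pmf.prob (foldl (\<lambda>M i. M \<bind> f i) (return_pmf x0) xs \<bind> f i)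
          {y. \<not> Inv (Suc (length xs)) y} \<le> real (length xs) * b + b"
    using snoc.prems[of "length xs"] by (intro prob_bind_failure_le[OF IH _ b]) simp
  then show ?case by (simp add: algebra_simps)
qed

lemma prob_Pi_pmf_failure_le:
  assumes fin: "finite I"
    and F: "\<And>i. i \<in> I \<Longrightarrow> measure_pmf.prob (F i) {e. \<not> G i e} \<le> z"
  shows "measure_pmf.prob (Pi_pmf I d F) {X. \<not> (\<forall>i\<in>I. G i (X i))} \<le> real (card I) * z"
proof -
  have eq: "{X. \<not> (\<forall>i\<in>I. G i (X i))} = (\<Union>i\<in>I. {X. \<not> G i (X i)})" by auto
  have "measure_pmf.prob (Pi_pmf I d F) {X. \<not> (\<forall>i\<in>I. G i (X i))}
        \<le> (\<Sum>i\<in>I. measure_pmf.prob (Pi_pmf I d F) {X. \<not> G i (X i)})"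
    unfolding eq by (rule measure_pmf.finite_measure_subadditive_finite) (use fin in auto)
  also have "\<dots> \<le> (\<Sum>i\<in>I. z)"
  proof (rule sum_mono)
    fix i assume i: "i \<in> I"
    have "measure_pmf.prob (Pi_pmf I d F) {X. \<not> G i (X i)}
          = measure_pmf.prob (map_pmf (\<lambda>X. X i) (Pi_pmf I d F)) {e. \<not> G i e}"
      by (simp add: vimage_def)
    also have "\<dots> = measure_pmf.prob (F i) {e. \<not> G i e}"
      by (simp add: Pi_pmf_component[OF fin] i)
    finally show "measure_pmf.prob (Pi_pmf I d F) {X. \<not> G i (X i)} \<le> z" using F[OF i] by simp
  qed
  finally show ?thesis by simp
qed

lemma prob_Pi_pmf_horizon_failure_le:
  fixes F :: "'s::finite \<times> 'a::finite \<times> nat \<Rightarrow> real pmf"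
  assumes "\<And>s a t. t < H \<Longrightarrow> measure_pmf.prob (F (s,a,t)) {e. \<not> G s a t e} \<le> z"
  shows "measure_pmf.prob (Pi_pmf (UNIV \<times> UNIV \<times> {..<H}) d F)
           {X. \<not> (\<forall>s a t. t < H \<longrightarrow> G s a t (X (s,a,t)))} \<le> real (CARD('s) * CARD('a) * H) * z"
proof -
  have bound: "measure_pmf.prob (Pi_pmf (UNIV \<times> UNIV \<times> {..<H}) d F)
      {X. \<not> (\<forall>i\<in>UNIV \<times> UNIV \<times> {..<H}. (\<lambda>(s,a,t). G s a t) i (X i))}
      \<le> real (card (UNIV \<times> UNIV \<times> {..<H} :: ('s \<times> 'a \<times> nat) set)) * z"
    using assms by (intro prob_Pi_pmf_failure_le) auto
  have eq: "{X. \<not> (\<forall>i\<in>UNIV \<times> UNIV \<times> {..<H}. (\<lambda>(s,a,t). G s a t) i (X i))}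
      = {X. \<not> (\<forall>s a t. t < H \<longrightarrow> G s a t (X (s,a,t)))}"
    by auto
  have card: "card (UNIV \<times> UNIV \<times> {..<H} :: ('s \<times> 'a \<times> nat) set) = CARD('s) * CARD('a) * H"
    by (simp add: card_cartesian_product)
  from bound show ?thesis unfolding eq card .
qed

section \<open>Expectation and variance under a finite distribution\<close>

lemma pexp_const [simp]: "pexp p (\<lambda>_. c) = c"
  by (simp add: pexp_def sum_distrib_right[symmetric] sum_pmf_eq_1)

lemma pexp_add: "pexp p (\<lambda>x. f x + g x) = pexp p f + pexp p g"
  by (simp add: pexp_def distrib_left sum.distrib)

lemma pexp_diff: "pexp p (\<lambda>x. f x - g x) = pexp p f - pexp p g"
  by (simp add: pexp_def right_diff_distrib sum_subtractf)

lemma pexp_cmult: "pexp p (\<lambda>x. c * f x) = c * pexp p f"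
  by (simp add: pexp_def sum_distrib_left mult.left_commute)

lemma pexp_mono: "(\<And>x. f x \<le> g x) \<Longrightarrow> pexp p f \<le> pexp p g"
  unfolding pexp_def by (intro sum_mono mult_left_mono) auto

lemma pexp_nonneg: "(\<And>x. 0 \<le> f x) \<Longrightarrow> 0 \<le> pexp p f"
  using pexp_mono[of "\<lambda>_. 0" f p] by simp

lemma pexp_le_const: "(\<And>x. f x \<le> c) \<Longrightarrow> pexp p f \<le> c"
  using pexp_mono[of f "\<lambda>_. c" p] by simp

lemma pvar_eq: "pvar p f = pexp p (\<lambda>x. (f x)\<^sup>2) - (pexp p f)\<^sup>2"
proof -
  have "pvar p f = pexp p (\<lambda>x. (f x)\<^sup>2 + (-2 * pexp p f) * f x + (pexp p f)\<^sup>2)"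
    unfolding pvar_def
    by (subst (2) pexp_def) (intro sum.cong refl, simp add: power2_eq_square algebra_simps)
  also have "\<dots> = pexp p (\<lambda>x. (f x)\<^sup>2) + (-2 * pexp p f) * pexp p f + (pexp p f)\<^sup>2"
    by (simp only: pexp_add pexp_cmult pexp_const)
  finally show ?thesis
    by (simp add: power2_eq_square)
qed

lemma pvar_nonneg: "0 \<le> pvar p f"
  unfolding pvar_def by (intro sum_nonneg) auto

lemma pvar_le_pexp_square: "pvar p f \<le> pexp p (\<lambda>x. (f x)\<^sup>2)"
  using pvar_eq[of p f] by simp

lemma pexp_sqrt_le_sqrt_pexp:
  assumes "\<And>x. 0 \<le> f x"
  shows "pexp p (\<lambda>x. sqrt (f x)) \<le> sqrt (pexp p f)"
proof -
  have "(pexp p (\<lambda>x. sqrt (f x)))\<^sup>2 \<le> pexp p (\<lambda>x. (sqrt (f x))\<^sup>2)"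
    using pvar_nonneg[of p "\<lambda>x. sqrt (f x)"] pvar_eq[of p "\<lambda>x. sqrt (f x)"] by simp
  also have "\<dots> = pexp p f" using assms by simp
  finally show ?thesis by (simp add: real_le_rsqrt)
qed

lemma pvar_add_le: "pvar p (\<lambda>x. f x + g x) \<le> 2 * pvar p f + 2 * pvar p g"
proof -
  have "pvar p (\<lambda>x. f x + g x) = pexp p (\<lambda>x. ((f x - pexp p f) + (g x - pexp p g))\<^sup>2)"
    unfolding pvar_def pexp_add by (simp add: pexp_def algebra_simps)
  also have "\<dots> \<le> pexp p (\<lambda>x. 2 * (f x - pexp p f)\<^sup>2 + 2 * (g x - pexp p g)\<^sup>2)"
    by (intro pexp_mono) (smt (verit) sum_squares_ge_zero power2_sum zero_le_power2 power2_diff)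
  also have "\<dots> = 2 * pvar p f + 2 * pvar p g"
    by (simp add: pexp_add pexp_cmult pvar_def pexp_def)
  finally show ?thesis .
qed

section \<open>Values of a policy\<close>

lemma horizon_induct [case_names beyond step]:
  assumes "\<And>t. H \<le> t \<Longrightarrow> Q t" and "\<And>t. t < H \<Longrightarrow> Q (Suc t) \<Longrightarrow> Q t"
  shows "Q t"
proof (induction "H - t" arbitrary: t)
  case 0
  then show ?case using assms(1) by simp
next
  case (Suc n)
  then show ?case using assms(2)[of t] by simp
qed

function pol_value :: "(nat \<Rightarrow> 's::finite \<Rightarrow> 'a \<Rightarrow> 's pmf) \<Rightarrow> nat \<Rightarrow> ('s \<Rightarrow> nat \<Rightarrow> 'a)
    \<Rightarrow> (nat \<Rightarrow> 's \<Rightarrow> real) \<Rightarrow> nat \<Rightarrow> 's \<Rightarrow> real" where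
  "pol_value P H pol f t s = (if t < H then f t s +
      (\<Sum>s'\<in>UNIV. pmf (P t s (pol s t)) s' * pol_value P H pol f (Suc t) s') else 0)"
  by pat_completeness auto
termination
  by (relation "Wellfounded.measure (\<lambda>(P,H,pol,f,t,s). H - t)") auto

declare pol_value.simps [simp del]

lemma pol_value_beyond [simp]: "H \<le> t \<Longrightarrow> pol_value P H pol f t s = 0"
  by (simp add: pol_value.simps)

lemma pol_value_step:
  "t < H \<Longrightarrow> pol_value P H pol f t s = f t s + pexp (P t s (pol s t)) (pol_value P H pol f (Suc t))"
  by (subst pol_value.simps) (simp add: pexp_def)

lemma pol_value_ge_subsolution:
  assumes sub: "\<And>t s. t0 \<le> t \<Longrightarrow> t < H \<Longrightarrow> D t s \<le> f t s + pexp (P t s (pol s t)) (D (Suc t))"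
    and beyond: "\<And>t s. H \<le> t \<Longrightarrow> D t s \<le> 0"
    and "t0 \<le> t"
  shows "D t s \<le> pol_value P H pol f t s"
  using \<open>t0 \<le> t\<close>
proof (induction t arbitrary: s rule: horizon_induct[of H])
  case (beyond t)
  then show ?case using assms(2) by simp
next
  case (step t)
  have "D t s \<le> f t s + pexp (P t s (pol s t)) (D (Suc t))" using sub step by blast
  also have "\<dots> \<le> f t s + pexp (P t s (pol s t)) (pol_value P H pol f (Suc t))"
    using step by (simp add: pexp_mono)
  finally show ?case by (simp add: pol_value_step step)
qed

lemma pol_value_mono:
  assumes "\<And>t s. t < H \<Longrightarrow> f t s \<le> g t s"
  shows "pol_value P H pol f t s \<le> pol_value P H pol g t s"
proof (induction t arbitrary: s rule: horizon_induct[of H])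
  case (step t)
  then show ?case using assms[of t s] by (simp add: pol_value_step add_mono pexp_mono)
qed simp

lemma pol_value_affine:
  "pol_value P H pol (\<lambda>t s. c * f t s + d) t s = c * pol_value P H pol f t s + real (H - t) * d"
proof (induction t arbitrary: s rule: horizon_induct[of H])
  case (step t)
  have IH: "pol_value P H pol (\<lambda>t s. c * f t s + d) (Suc t)
      = (\<lambda>s. c * pol_value P H pol f (Suc t) s + real (H - Suc t) * d)"
    using step.IH by auto
  have "pol_value P H pol (\<lambda>t s. c * f t s + d) t s
      = c * f t s + d + pexp (P t s (pol s t)) (\<lambda>s. c * pol_value P H pol f (Suc t) s + real (H - Suc t) * d)"
    by (simp add: pol_value_step step.hyps IH)
  also have "\<dots> = c * (f t s + pexp (P t s (pol s t)) (pol_value P H pol f (Suc t)))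
      + (real (H - Suc t) + 1) * d"
    by (simp only: pexp_add pexp_cmult pexp_const) (simp add: algebra_simps)
  also have "\<dots> = c * pol_value P H pol f t s + real (H - t) * d"
    using step.hyps by (simp add: pol_value_step Suc_diff_Suc)
  finally show ?case .
qed simp

lemma pol_value_nonneg: "(\<And>t s. t < H \<Longrightarrow> 0 \<le> f t s) \<Longrightarrow> 0 \<le> pol_value P H pol f t s"
  using pol_value_mono[of H "\<lambda>_ _. 0" f P pol t s] pol_value_affine[of P H pol 0 f 0 t s] by simp

lemma Vpi_eq_pol_value: "Vpi P r H pol t s = pol_value P H pol (\<lambda>t s. r t s (pol s t)) t s"
proof (induction t arbitrary: s rule: horizon_induct[of H])
  case (beyond t)
  then show ?case by (simp add: Vpi.simps)
next
  case (step t)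
  then show ?case by (subst Vpi.simps) (simp add: pol_value_step pexp_def)
qed

lemma Vpi_step:
  "t < H \<Longrightarrow> Vpi P r H pol t s = r t s (pol s t) + pexp (P t s (pol s t)) (Vpi P r H pol (Suc t))"
  by (subst Vpi.simps) (simp add: pexp_def)

lemma Vpi_beyond [simp]: "H \<le> t \<Longrightarrow> Vpi P r H pol t s = 0"
  by (simp add: Vpi.simps)

lemma Qpi_eq: "Qpi P r H pol t s a = r t s a + pexp (P t s a) (Vpi P r H pol (Suc t))"
  by (simp add: Qpi_def pexp_def)

definition sub_bellman :: "(nat \<Rightarrow> 's::finite \<Rightarrow> 'a \<Rightarrow> 's pmf) \<Rightarrow> (nat \<Rightarrow> 's \<Rightarrow> 'a \<Rightarrow> real) \<Rightarrow> nat
    \<Rightarrow> ('s \<Rightarrow> nat \<Rightarrow> 'a) \<Rightarrow> nat \<Rightarrow> (nat \<Rightarrow> 's \<Rightarrow> real) \<Rightarrow> bool" where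
  "sub_bellman P r H pol t0 V \<longleftrightarrow> (\<forall>t s. H \<le> t \<longrightarrow> V t s = 0) \<and>
     (\<forall>t s. t0 \<le> t \<longrightarrow> t < H \<longrightarrow> V t s \<le> r t s (pol s t) + pexp (P t s (pol s t)) (V (Suc t)))"

lemma sub_bellman_le_Vpi:
  assumes "sub_bellman P r H pol t0 V" "t0 \<le> t"
  shows "V t s \<le> Vpi P r H pol t s"
proof -
  have "V t s \<le> pol_value P H pol (\<lambda>t s. r t s (pol s t)) t s"
    using assms unfolding sub_bellman_def by (intro pol_value_ge_subsolution[of t0]) auto
  then show ?thesis by (simp add: Vpi_eq_pol_value)
qed

lemma sub_bellman_update:
  assumes "sub_bellman P r H pol (Suc h) V" "h < H"
    and "\<And>s. v s \<le> r h s (p s) + pexp (P h s (p s)) (V (Suc h))"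
  shows "sub_bellman P r H (\<lambda>s t. if t = h then p s else pol s t) h (V(h := v))"
  unfolding sub_bellman_def
proof (intro conjI allI impI)
  fix t s assume "H \<le> t"
  then show "(V(h := v)) t s = 0" using assms(1,2) unfolding sub_bellman_def by auto
next
  fix t s assume t: "h \<le> t" "t < H"
  show "(V(h := v)) t s \<le> r t s (if t = h then p s else pol s t)
      + pexp (P t s (if t = h then p s else pol s t)) ((V(h := v)) (Suc t))"
  proof (cases "t = h")
    case True
    then show ?thesis using assms(3) by simp
  next
    case False
    then show ?thesis using assms(1) t unfolding sub_bellman_def by auto
  qed
qed

section \<open>Optimal values\<close>

lemma SOME_maximizer:
  fixes f :: "'a::finite \<Rightarrow> 'b::linorder"
  shows "f a \<le> f (SOME a. \<forall>a'. f a' \<le> f a)" and "Max (range f) = f (SOME a. \<forall>a'. f a' \<le> f a)"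
proof -
  obtain a0 where "Max (range f) = f a0" using Max_in[of "range f"] by fastforce
  then have a0: "\<forall>a'. f a' \<le> f a0" using Max_ge[of "range f"] by auto
  then have max: "\<forall>a'. f a' \<le> f (SOME a. \<forall>a'. f a' \<le> f a)" by (rule someI)
  then show "f a \<le> f (SOME a. \<forall>a'. f a' \<le> f a)" by blast
  show "Max (range f) = f (SOME a. \<forall>a'. f a' \<le> f a)"
    using max by (intro Max_eqI) auto
qed

text \<open>Backward induction: the greedy policy \<open>opt_policy\<close> attains the solution \<open>vopt\<close> of the
  Bellman optimality equation, which identifies the suprema \<^const>\<open>Vstar\<close> and \<^const>\<open>Qstar\<close>.\<close>

function vopt :: "(nat \<Rightarrow> 's::finite \<Rightarrow> 'a::finite \<Rightarrow> 's pmf) \<Rightarrow> (nat \<Rightarrow> 's \<Rightarrow> 'a \<Rightarrow> real)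
    \<Rightarrow> nat \<Rightarrow> nat \<Rightarrow> 's \<Rightarrow> real" where
  "vopt P r H t s = (if t < H then Max (range (\<lambda>a. r t s a +
      (\<Sum>s'\<in>UNIV. pmf (P t s a) s' * vopt P r H (Suc t) s'))) else 0)"
  by pat_completeness auto
termination
  by (relation "Wellfounded.measure (\<lambda>(P,r,H,t,s). H - t)") auto

declare vopt.simps [simp del]

definition qopt :: "(nat \<Rightarrow> 's::finite \<Rightarrow> 'a::finite \<Rightarrow> 's pmf) \<Rightarrow> (nat \<Rightarrow> 's \<Rightarrow> 'a \<Rightarrow> real)
    \<Rightarrow> nat \<Rightarrow> nat \<Rightarrow> 's \<Rightarrow> 'a \<Rightarrow> real" where
  "qopt P r H t s a = r t s a + pexp (P t s a) (vopt P r H (Suc t))"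

definition opt_policy :: "(nat \<Rightarrow> 's::finite \<Rightarrow> 'a::finite \<Rightarrow> 's pmf) \<Rightarrow> (nat \<Rightarrow> 's \<Rightarrow> 'a \<Rightarrow> real)
    \<Rightarrow> nat \<Rightarrow> 's \<Rightarrow> nat \<Rightarrow> 'a" where
  "opt_policy P r H s t = (SOME a. \<forall>a'. qopt P r H t s a' \<le> qopt P r H t s a)"

lemma vopt_beyond [simp]: "H \<le> t \<Longrightarrow> vopt P r H t s = 0"
  by (simp add: vopt.simps)

lemma vopt_opt_policy: "t < H \<Longrightarrow> vopt P r H t s = qopt P r H t s (opt_policy P r H s t)"
  by (subst vopt.simps) (simp add: qopt_def pexp_def opt_policy_def SOME_maximizer(2))

lemma qopt_le_vopt: "t < H \<Longrightarrow> qopt P r H t s a \<le> vopt P r H t s"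
  unfolding vopt_opt_policy opt_policy_def by (rule SOME_maximizer(1))

lemma Vpi_le_vopt: "Vpi P r H pol t s \<le> vopt P r H t s"
proof (induction t arbitrary: s rule: horizon_induct[of H])
  case (step t)
  have "Vpi P r H pol t s \<le> qopt P r H t s (pol s t)"
    unfolding qopt_def Vpi_step[OF step.hyps] using step.IH by (simp add: pexp_mono)
  also have "\<dots> \<le> vopt P r H t s" by (rule qopt_le_vopt[OF step.hyps])
  finally show ?case .
qed simp

lemma Vpi_opt_policy_eq_vopt: "Vpi P r H (opt_policy P r H) t s = vopt P r H t s"
proof (induction t arbitrary: s rule: horizon_induct[of H])
  case (step t)
  then have "Vpi P r H (opt_policy P r H) (Suc t) = vopt P r H (Suc t)" by auto
  with step.hyps show ?case by (simp add: Vpi_step vopt_opt_policy qopt_def)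
qed simp

lemma Vstar_eq_vopt: "Vstar P r H t s = vopt P r H t s"
  unfolding Vstar_def
  by (rule cSup_eq_maximum) (auto simp: Vpi_le_vopt intro: range_eqI Vpi_opt_policy_eq_vopt[symmetric])

lemma Qstar_eq_qopt: "Qstar P r H t s a = qopt P r H t s a"
  unfolding Qstar_def
proof (rule cSup_eq_maximum)
  show "qopt P r H t s a \<in> range (\<lambda>pol. Qpi P r H pol t s a)"
    by (rule range_eqI[of _ _ "opt_policy P r H"]) (simp add: Qpi_eq qopt_def Vpi_opt_policy_eq_vopt[abs_def])
qed (auto simp: Qpi_eq qopt_def intro!: pexp_mono Vpi_le_vopt)

context
  fixes P :: "nat \<Rightarrow> 's::finite \<Rightarrow> 'a::finite \<Rightarrow> 's pmf"
begin

lemma Vpi_le_Vstar: "Vpi P r H pol t s \<le> Vstar P r H t s"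
  by (simp add: Vstar_eq_vopt Vpi_le_vopt)

lemma Vstar_beyond [simp]: "H \<le> t \<Longrightarrow> Vstar P r H t s = 0"
  by (simp add: Vstar_eq_vopt)

lemma Qstar_eq: "Qstar P r H t s a = r t s a + pexp (P t s a) (Vstar P r H (Suc t))"
  by (simp add: Qstar_eq_qopt qopt_def Vstar_eq_vopt[abs_def])

lemma Qpi_le_Qstar: "Qpi P r H pol t s a \<le> Qstar P r H t s a"
  by (simp add: Qpi_eq Qstar_eq pexp_mono Vpi_le_Vstar)

lemma Vstar_eq_Qstar_opt_policy: "t < H \<Longrightarrow> Vstar P r H t s = Qstar P r H t s (opt_policy P r H s t)"
  by (simp add: Vstar_eq_vopt Qstar_eq_qopt vopt_opt_policy)

lemma Qstar_le_Vstar: "t < H \<Longrightarrow> Qstar P r H t s a \<le> Vstar P r H t s"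
  by (simp add: Vstar_eq_vopt Qstar_eq_qopt qopt_le_vopt)

end

section \<open>Total variance along optimal trajectories\<close>

lemma sqrt_add_sqrt_mult_le:
  fixes a b m :: real
  assumes "0 \<le> a" "0 \<le> b" "0 \<le> m"
  shows "sqrt a + sqrt (m * b) \<le> sqrt ((m + 1) * (a + b))"
proof -
  have "2 * sqrt (m * a) * sqrt b \<le> (sqrt (m * a))\<^sup>2 + (sqrt b)\<^sup>2"
    by (smt (verit) sum_squares_ge_zero power2_diff zero_le_power2)
  then have "(sqrt a + sqrt (m * b))\<^sup>2 \<le> (m + 1) * (a + b)"
    using assms by (simp add: power2_sum real_sqrt_mult algebra_simps)
  then show ?thesis
    using assms by (simp add: real_le_rsqrt)
qed

locale bounded_reward_mdp =
  fixes P :: "nat \<Rightarrow> 's::finite \<Rightarrow> 'a::finite \<Rightarrow> 's pmf"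
    and r :: "nat \<Rightarrow> 's \<Rightarrow> 'a \<Rightarrow> real"
    and H :: nat
  assumes reward_bounds: "\<And>h s a. h < H \<Longrightarrow> 0 \<le> r h s a \<and> r h s a \<le> 1"
begin

abbreviation pistar where "pistar \<equiv> opt_policy P r H"

lemma Vstar_step:
  "t < H \<Longrightarrow> Vstar P r H t s = r t s (pistar s t) + pexp (P t s (pistar s t)) (Vstar P r H (Suc t))"
  by (simp add: Vstar_eq_Qstar_opt_policy Qstar_eq)

lemma Vstar_bounds: "0 \<le> Vstar P r H t s \<and> Vstar P r H t s \<le> real (H - t)"
proof (induction t arbitrary: s rule: horizon_induct[of H])
  case (step t)
  have "0 \<le> pexp (P t s (pistar s t)) (Vstar P r H (Suc t))"
    and "pexp (P t s (pistar s t)) (Vstar P r H (Suc t)) \<le> real (H - Suc t)"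
    using step.IH by (auto intro: pexp_nonneg pexp_le_const)
  moreover have "real (H - t) = real (H - Suc t) + 1" using step.hyps by simp
  ultimately show ?case
    using Vstar_step[OF step.hyps] reward_bounds[OF step.hyps, of s "pistar s t"] by simp
qed simp

lemma Vstar_le_H: "Vstar P r H t s \<le> real H"
  using Vstar_bounds[of t s] by (meson diff_le_self of_nat_le_iff order_trans)

definition opt_variance :: "nat \<Rightarrow> 's \<Rightarrow> real" where
  "opt_variance t s = pvar (P t s (pistar s t)) (Vstar P r H (Suc t))"

definition total_variance :: "nat \<Rightarrow> 's \<Rightarrow> real" where
  "total_variance = pol_value P H pistar opt_variance"

lemma total_variance_nonneg: "0 \<le> total_variance t s"
  unfolding total_variance_def by (rule pol_value_nonneg) (simp add: opt_variance_def pvar_nonneg)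

text \<open>Law of total variance: the variances of \<^const>\<open>Vstar\<close> along optimal trajectories add up
  to at most the squared range \<open>(H - t)\<^sup>2\<close> of the return, not \<open>(H - t)\<^sup>3\<close>.\<close>

lemma total_variance_le: "total_variance t s + (Vstar P r H t s)\<^sup>2 \<le> (real (H - t))\<^sup>2"
proof (induction t arbitrary: s rule: horizon_induct[of H])
  case (beyond t)
  then show ?case by (simp add: total_variance_def)
next
  case (step t)
  define p where "p = P t s (pistar s t)"
  define V' where "V' = Vstar P r H (Suc t)"
  define m where "m = pexp p V'"
  define \<rho> where "\<rho> = r t s (pistar s t)"
  have \<rho>: "0 \<le> \<rho>" "\<rho> \<le> 1" using reward_bounds[OF step.hyps] unfolding \<rho>_def by auto
  have m: "m \<le> real (H - Suc t)"
    unfolding m_def V'_def by (rule pexp_le_const) (use Vstar_bounds in auto)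
  have "total_variance t s + (Vstar P r H t s)\<^sup>2
      = pexp p (\<lambda>x. (V' x)\<^sup>2) - m\<^sup>2 + pexp p (total_variance (Suc t)) + (\<rho> + m)\<^sup>2"
    using step.hyps
    by (simp add: total_variance_def pol_value_step opt_variance_def pvar_eq Vstar_step
        p_def V'_def m_def \<rho>_def)
  also have "\<dots> = pexp p (\<lambda>x. total_variance (Suc t) x + (V' x)\<^sup>2) + \<rho>\<^sup>2 + 2 * \<rho> * m"
    by (simp add: pexp_add power2_eq_square algebra_simps)
  also have "\<dots> \<le> (real (H - Suc t))\<^sup>2 + \<rho>\<^sup>2 + 2 * \<rho> * real (H - Suc t)"
    using step.IH m \<rho> unfolding V'_def
    by (intro add_mono pexp_le_const mult_left_mono order.refl) auto
  also have "\<dots> = (real (H - Suc t) + \<rho>)\<^sup>2"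
    by (simp add: power2_eq_square algebra_simps)
  also have "\<dots> \<le> (real (H - t))\<^sup>2"
    using \<rho> step.hyps by (intro power_mono) auto
  finally show ?case .
qed

text \<open>Cauchy--Schwarz along trajectories.\<close>

lemma pol_value_sqrt_opt_variance_le:
  "pol_value P H pistar (\<lambda>t s. sqrt (opt_variance t s)) t s \<le> sqrt (real (H - t) * total_variance t s)"
proof (induction t arbitrary: s rule: horizon_induct[of H])
  case (step t)
  define p where "p = P t s (pistar s t)"
  define m where "m = real (H - Suc t)"
  have "pol_value P H pistar (\<lambda>t s. sqrt (opt_variance t s)) t s
        \<le> sqrt (opt_variance t s) + pexp p (\<lambda>s'. sqrt (m * total_variance (Suc t) s'))"
    using step unfolding p_def m_def by (simp add: pol_value_step pexp_mono)
  also have "\<dots> \<le> sqrt (opt_variance t s) + sqrt (m * pexp p (total_variance (Suc t)))"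
    using pexp_sqrt_le_sqrt_pexp[of "\<lambda>s'. m * total_variance (Suc t) s'" p]
    by (simp add: m_def total_variance_nonneg pexp_cmult)
  also have "\<dots> \<le> sqrt ((m + 1) * (opt_variance t s + pexp p (total_variance (Suc t))))"
    by (rule sqrt_add_sqrt_mult_le)
      (auto simp: opt_variance_def pvar_nonneg m_def intro!: pexp_nonneg total_variance_nonneg)
  also have "\<dots> = sqrt (real (H - t) * total_variance t s)"
    using step.hyps by (simp add: m_def p_def total_variance_def pol_value_step Suc_diff_Suc)
  finally show ?case .
qed simp

lemma pol_value_sqrt_opt_variance_le_H:
  "pol_value P H pistar (\<lambda>t s. sqrt (opt_variance t s)) t s \<le> real H * sqrt (real H)"
proof -
  have "(real (H - t))\<^sup>2 \<le> (real H)\<^sup>2" by (intro power_mono) auto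
  then have "total_variance t s \<le> (real H)\<^sup>2"
    using total_variance_le[of t s] zero_le_power2[of "Vstar P r H t s"] by linarith
  then have "real (H - t) * total_variance t s \<le> real H * (real H)\<^sup>2"
    using total_variance_nonneg by (intro mult_mono) auto
  then have "sqrt (real (H - t) * total_variance t s) \<le> sqrt (real H * (real H)\<^sup>2)"
    by (rule real_sqrt_le_mono)
  also have "\<dots> = real H * sqrt (real H)" by (simp add: real_sqrt_mult)
  finally show ?thesis using pol_value_sqrt_opt_variance_le[of t s] by linarith
qed

end

section \<open>Analysis of QVI-4\<close>

lemma QME1_failure_le:
  assumes "QME1_spec qme1" "\<And>x. 0 \<le> f x \<and> f x \<le> u" "0 < \<eta>" "0 < \<zeta>"
  shows "measure_pmf.prob (qme1 p f u \<eta> \<zeta>) {e. \<not> \<bar>e - pexp p f\<bar> < \<eta>} \<le> \<zeta>"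
proof -
  have "measure_pmf.prob (qme1 p f u \<eta> \<zeta>) {e. \<bar>e - pexp p f\<bar> < \<eta>} > 1 - \<zeta>"
    using assms unfolding QME1_spec_def by blast
  then show ?thesis unfolding measure_pmf_prob_Collect_not by linarith
qed

lemma QME2_failure_le:
  assumes "QME2_spec qme2" "pvar p f \<le> \<sigma>\<^sup>2" "0 < \<eta>" "\<eta> < 4 * \<sigma>" "0 < \<zeta>"
  shows "measure_pmf.prob (qme2 p f \<sigma> \<eta> \<zeta>) {e. \<not> \<bar>e - pexp p f\<bar> < \<eta>} \<le> \<zeta>"
proof -
  have "measure_pmf.prob (qme2 p f \<sigma> \<eta> \<zeta>) {e. \<bar>e - pexp p f\<bar> < \<eta>} > 1 - \<zeta>"
    using assms unfolding QME2_spec_def by blast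
  then show ?thesis unfolding measure_pmf_prob_Collect_not by linarith
qed

lemma qvi_c_eq: "qvi_c = 1 / 1000"
  by (simp add: qvi_c_def)

definition sweep_Q :: "(nat \<Rightarrow> 's \<Rightarrow> 'a \<Rightarrow> real) \<Rightarrow> nat \<Rightarrow> real \<Rightarrow> ('s \<times> 'a \<times> nat \<Rightarrow> real) \<Rightarrow> nat
    \<Rightarrow> ('s \<times> 'a \<Rightarrow> real) \<Rightarrow> 's \<Rightarrow> 'a \<Rightarrow> real" where
  "sweep_Q r H \<epsilon>k x h G s a = max (r h s a + x (s,a,h) + (G (s,a) - qvi_c * \<epsilon>k / real H)) 0"

definition sweep_V :: "(nat \<Rightarrow> 's \<Rightarrow> real) \<Rightarrow> nat \<Rightarrow> ('s \<Rightarrow> 'a::finite \<Rightarrow> real) \<Rightarrow> 's \<Rightarrow> real" where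
  "sweep_V V0 h Q s = (if Max (range (Q s)) \<le> V0 h s then V0 h s else Max (range (Q s)))"

definition sweep_pol :: "(nat \<Rightarrow> 's \<Rightarrow> real) \<Rightarrow> ('s \<Rightarrow> nat \<Rightarrow> 'a) \<Rightarrow> nat \<Rightarrow> ('s \<Rightarrow> 'a::finite \<Rightarrow> real)
    \<Rightarrow> 's \<Rightarrow> 'a" where
  "sweep_pol V0 pi0 h Q s = (if Max (range (Q s)) \<le> V0 h s then pi0 s h else (SOME a. \<forall>a'. Q s a' \<le> Q s a))"

lemma qvi_step_eq:
  "qvi_step qme1 P r H \<epsilon>k \<zeta> V0 pi0 x h (V, pol, Q) =
   Pi_pmf UNIV 0 (\<lambda>(s,a). qme1 (P h s a) (\<lambda>s'. V (Suc h) s' - V0 (Suc h) s') (2 * \<epsilon>k)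
       (qvi_c * \<epsilon>k / real H) \<zeta>)
   \<bind> (\<lambda>G. return_pmf (V(h := sweep_V V0 h (sweep_Q r H \<epsilon>k x h G)),
            (\<lambda>s t. if t = h then sweep_pol V0 pi0 h (sweep_Q r H \<epsilon>k x h G) s else pol s t),
            Q(h := sweep_Q r H \<epsilon>k x h G)))"
  unfolding qvi_step_def sweep_V_def[abs_def] sweep_pol_def[abs_def] sweep_Q_def[abs_def] Let_def prod.case ..

lemma sweep_V_ge: "V0 h s \<le> sweep_V V0 h Q s" "Q s a \<le> sweep_V V0 h Q s"
proof -
  define M where "M = Max (range (Q s))"
  have "Q s a \<le> M" unfolding M_def by (rule Max_ge) auto
  then show "V0 h s \<le> sweep_V V0 h Q s" "Q s a \<le> sweep_V V0 h Q s"
    unfolding sweep_V_def M_def[symmetric] by auto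
qed

lemma sweep_V_le_bellman:
  assumes "V0 h s \<le> r h s (pi0 s h) + pexp (P h s (pi0 s h)) (V0 (Suc h))"
    and "\<And>s'. V0 (Suc h) s' \<le> V (Suc h) s'"
    and "\<And>a. Q s a \<le> r h s a + pexp (P h s a) (V (Suc h))"
  shows "sweep_V V0 h Q s
      \<le> r h s (sweep_pol V0 pi0 h Q s) + pexp (P h s (sweep_pol V0 pi0 h Q s)) (V (Suc h))"
proof (cases "Max (range (Q s)) \<le> V0 h s")
  case True
  have "V0 h s \<le> r h s (pi0 s h) + pexp (P h s (pi0 s h)) (V (Suc h))"
    using assms(1) pexp_mono[of "V0 (Suc h)" "V (Suc h)" "P h s (pi0 s h)", OF assms(2)] by linarith
  then show ?thesis using True by (simp add: sweep_V_def sweep_pol_def)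
next
  case False
  have "sweep_V V0 h Q s = Max (range (Q s))" unfolding sweep_V_def by (rule if_not_P[OF False])
  moreover have "sweep_pol V0 pi0 h Q s = (SOME a. \<forall>a'. Q s a' \<le> Q s a)"
    unfolding sweep_pol_def by (rule if_not_P[OF False])
  ultimately show ?thesis unfolding SOME_maximizer(2) by (simp only: assms(3))
qed

text \<open>The clipped estimate of the Bellman backup \<open>\<rho> + m\<close>, where \<open>x\<close> underestimates the
  reference part \<open>m0\<close> and \<open>G\<close> estimates the increment \<open>m - m0\<close>.\<close>

lemma clipped_estimate_bounds:
  fixes \<rho> m m0 x G d \<eta> :: real
  assumes "0 \<le> \<rho> + m" "m0 - d \<le> x" "x \<le> m0" "\<bar>G - (m - m0)\<bar> < \<eta>"
  shows "\<rho> + m - (d + 2 * \<eta>) \<le> max (\<rho> + x + (G - \<eta>)) 0" "max (\<rho> + x + (G - \<eta>)) 0 \<le> \<rho> + m"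
proof -
  have G: "m - m0 - \<eta> < G" "G < m - m0 + \<eta>" using assms(4) by (auto simp: abs_less_iff)
  show "\<rho> + m - (d + 2 * \<eta>) \<le> max (\<rho> + x + (G - \<eta>)) 0"
    using G assms(2) by (intro max.coboundedI1) linarith
  show "max (\<rho> + x + (G - \<eta>)) 0 \<le> \<rho> + m"
    using G assms(1,3) by (intro max.boundedI) linarith+
qed

lemma variance_estimate_error:
  fixes m q E1 E2 c :: real
  assumes m: "0 \<le> m" "m \<le> c" and c: "1 \<le> c"
    and E2: "\<bar>E2 - q\<bar> < 1" and E1: "\<bar>E1 - m\<bar> < 1 / c"
  shows "\<bar>(E2 - E1\<^sup>2) - (q - m\<^sup>2)\<bar> < 4"
proof -
  have "\<bar>E1 - m\<bar> \<le> 1" using E1 c by (smt (verit) divide_le_eq_1)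
  then have "\<bar>E1 + m\<bar> \<le> 2 * c + 1" using m by linarith
  moreover have "\<bar>E1\<^sup>2 - m\<^sup>2\<bar> = \<bar>E1 - m\<bar> * \<bar>E1 + m\<bar>"
    by (simp add: power2_eq_square abs_mult[symmetric] algebra_simps)
  moreover have "\<bar>E1 - m\<bar> * \<bar>E1 + m\<bar> \<le> 1 / c * (2 * c + 1)"
    by (rule mult_mono) (use E1 c \<open>\<bar>E1 + m\<bar> \<le> 2 * c + 1\<close> in auto)
  ultimately have "\<bar>E1\<^sup>2 - m\<^sup>2\<bar> \<le> 1 / c * (2 * c + 1)" by simp
  also have "\<dots> \<le> 3" using c by (simp add: field_simps)
  finally show ?thesis using E2 by linarith
qed

lemma sqrt_add3_le:
  "0 \<le> a \<Longrightarrow> 0 \<le> b \<Longrightarrow> 0 \<le> c \<Longrightarrow> sqrt (a + b + c) \<le> sqrt a + sqrt b + sqrt c"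
  by (smt (verit) sqrt_add_le_add_sqrt)

lemma powr_minus_three_halves: "0 < x \<Longrightarrow> (x::real) powr (-1.5) = 1 / (x * sqrt x)"
proof -
  assume x: "0 < x"
  have e: "x powr (1 + 1/2) = x * sqrt x" using x by (subst powr_add) (simp add: powr_half_sqrt)
  have m: "(-1.5::real) = - (1 + 1/2)" by simp
  show ?thesis unfolding m powr_minus e by (simp add: divide_inverse)
qed

lemma error_budget_le:
  fixes e \<epsilon> w :: real
  assumes "0 \<le> w" "w \<le> 1" "w \<le> \<epsilon>" "\<epsilon> \<le> 2 * e"
  shows "4 * qvi_c * \<epsilon> + 4 * qvi_c * (w * e) + 6 * qvi_c * w + 2 * qvi_c * e \<le> e / 2"
proof -
  have "w * e \<le> e" using assms by (intro mult_left_le_one_le) auto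
  then show ?thesis using assms unfolding qvi_c_eq by linarith
qed

locale qvi4_analysis = bounded_reward_mdp P r H
  for P :: "nat \<Rightarrow> 's::finite \<Rightarrow> 'a::finite \<Rightarrow> 's pmf" and r H +
  fixes \<epsilon> :: real and qme1 qme2 :: "'s qme"
  assumes eps_pos: "0 < \<epsilon>" and eps_le: "\<epsilon> \<le> sqrt (real H)"
    and qme1: "QME1_spec qme1" and qme2: "QME2_spec qme2"
begin

abbreviation eps_k :: "nat \<Rightarrow> real" where
  "eps_k k \<equiv> real H / 2 ^ k"

lemma H_ge_1: "1 \<le> real H"
  using eps_pos eps_le by (cases H) auto

lemma eps_le_H: "\<epsilon> \<le> real H"
proof -
  have "sqrt (real H) \<le> real H"
    using H_ge_1 by (simp add: real_le_lsqrt power2_eq_square)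
  then show ?thesis using eps_le by linarith
qed

lemma eps_k_bounds:
  shows "k < qvi_K H \<epsilon> \<Longrightarrow> \<epsilon> \<le> 2 * eps_k k" and "eps_k (qvi_K H \<epsilon>) \<le> \<epsilon> / 2"
proof -
  define n where "n = nat \<lceil>log 2 (real H / \<epsilon>)\<rceil>"
  have L: "2 powr log 2 (real H / \<epsilon>) = real H / \<epsilon>" "0 \<le> log 2 (real H / \<epsilon>)"
    using eps_pos eps_le_H H_ge_1 by auto
  have "real H / \<epsilon> \<le> 2 ^ n"
    using L by (metis n_def powr_realpow powr_mono real_nat_ceiling_ge one_le_numeral zero_less_numeral)
  then show "eps_k (qvi_K H \<epsilon>) \<le> \<epsilon> / 2"
    using eps_pos unfolding qvi_K_def n_def[symmetric] by (simp add: field_simps)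
  assume "k < qvi_K H \<epsilon>"
  then have "(2::real) ^ k \<le> 2 ^ n" unfolding qvi_K_def n_def[symmetric] by (simp add: power_increasing)
  also have "\<dots> < 2 * (real H / \<epsilon>)"
  proof -
    have "real n < log 2 (real H / \<epsilon>) + 1" unfolding n_def using L(2) by linarith
    then have "2 powr real n < 2 powr (log 2 (real H / \<epsilon>) + 1)" by simp
    then show ?thesis using L(1) by (simp add: powr_add powr_realpow mult.commute)
  qed
  finally show "\<epsilon> \<le> 2 * eps_k k" using eps_pos by (simp add: field_simps)
qed

lemma eps_k_le_H: "eps_k k \<le> real H"
  by (simp add: divide_le_eq mult_le_cancel_left1)

definition good_reference :: "nat \<Rightarrow> (nat \<Rightarrow> 's \<Rightarrow> real) \<Rightarrow> ('s \<Rightarrow> nat \<Rightarrow> 'a) \<Rightarrow> bool" where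
  "good_reference k V pol \<longleftrightarrow> sub_bellman P r H pol 0 V \<and> (\<forall>t s. 0 \<le> V t s)
     \<and> (\<forall>t s. Vstar P r H t s - V t s \<le> eps_k k)"

lemma good_reference_bounds:
  assumes "good_reference k V pol"
  shows "0 \<le> V t s" "V t s \<le> Vpi P r H pol t s" "V t s \<le> Vstar P r H t s"
    "Vstar P r H t s - V t s \<le> eps_k k"
proof -
  show "0 \<le> V t s" "Vstar P r H t s - V t s \<le> eps_k k"
    using assms unfolding good_reference_def by auto
  show "V t s \<le> Vpi P r H pol t s"
    using assms sub_bellman_le_Vpi unfolding good_reference_def by blast
  then show "V t s \<le> Vstar P r H t s"
    using Vpi_le_Vstar order_trans by blast
qed

lemma good_reference_le_H: "good_reference k V pol \<Longrightarrow> V t s \<le> real H"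
  using good_reference_bounds(3) Vstar_le_H order_trans by blast

fun sweep_inv :: "(nat \<Rightarrow> 's \<Rightarrow> real) \<Rightarrow> ('s \<times> 'a \<times> nat \<Rightarrow> real) \<Rightarrow> nat \<Rightarrow> ('s,'a) qstate \<Rightarrow> bool"
  where
  "sweep_inv V0 e h0 (V, pol, Q) \<longleftrightarrow> sub_bellman P r H pol h0 V \<and>
     (\<forall>t s a. h0 \<le> t \<longrightarrow> t < H \<longrightarrow> V0 t s \<le> V t s \<and> Q t s a \<le> V t s \<and>
        r t s a + pexp (P t s a) (V (Suc t)) - e (s,a,t) \<le> Q t s a \<and>
        Q t s a \<le> r t s a + pexp (P t s a) (V (Suc t)))"

lemma sweep_inv_ge_reference:
  assumes "good_reference k V0 pi0" "sweep_inv V0 e h0 (V, pol, Q)" "h0 \<le> t"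
  shows "V0 t s \<le> V t s"
  using assms by (cases "t < H") (auto simp: good_reference_def sub_bellman_def)

lemma sweep_Q_bounds:
  assumes V0: "good_reference k V0 pi0" and h: "h < H"
    and inv: "sweep_inv V0 e (Suc h) (V, pol, Q)"
    and x: "pexp (P h s a) (V0 (Suc h)) - d (s,a,h) \<le> x (s,a,h)"
      "x (s,a,h) \<le> pexp (P h s a) (V0 (Suc h))"
    and e: "e (s,a,h) = d (s,a,h) + 2 * (qvi_c * \<epsilon>k / real H)"
    and G: "\<bar>G (s,a) - pexp (P h s a) (\<lambda>s'. V (Suc h) s' - V0 (Suc h) s')\<bar> < qvi_c * \<epsilon>k / real H"
  shows "r h s a + pexp (P h s a) (V (Suc h)) - e (s,a,h) \<le> sweep_Q r H \<epsilon>k x h G s a"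
    and "sweep_Q r H \<epsilon>k x h G s a \<le> r h s a + pexp (P h s a) (V (Suc h))"
proof -
  have "0 \<le> pexp (P h s a) (V (Suc h))"
    using good_reference_bounds(1)[OF V0] sweep_inv_ge_reference[OF V0 inv]
    by (meson order_trans pexp_nonneg le_refl)
  then have "0 \<le> r h s a + pexp (P h s a) (V (Suc h))"
    using reward_bounds[OF h] by simp
  then show "r h s a + pexp (P h s a) (V (Suc h)) - e (s,a,h) \<le> sweep_Q r H \<epsilon>k x h G s a"
    and "sweep_Q r H \<epsilon>k x h G s a \<le> r h s a + pexp (P h s a) (V (Suc h))"
    using clipped_estimate_bounds[of "r h s a" "pexp (P h s a) (V (Suc h))"
        "pexp (P h s a) (V0 (Suc h))" "d (s,a,h)" "x (s,a,h)" "G (s,a)" "qvi_c * \<epsilon>k / real H"] x G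
    by (simp_all add: sweep_Q_def e pexp_diff)
qed

lemma sweep_inv_step:
  fixes G :: "'s \<times> 'a \<Rightarrow> real"
  assumes V0: "good_reference k V0 pi0" and h: "h < H"
    and inv: "sweep_inv V0 e (Suc h) (V, pol, Q)"
    and x: "\<And>s a. pexp (P h s a) (V0 (Suc h)) - d (s,a,h) \<le> x (s,a,h)
                   \<and> x (s,a,h) \<le> pexp (P h s a) (V0 (Suc h))"
    and e: "\<And>s a. e (s,a,h) = d (s,a,h) + 2 * (qvi_c * \<epsilon>k / real H)"
    and G: "\<And>s a. \<bar>G (s,a) - pexp (P h s a) (\<lambda>s'. V (Suc h) s' - V0 (Suc h) s')\<bar> < qvi_c * \<epsilon>k / real H"
  defines "Qh \<equiv> sweep_Q r H \<epsilon>k x h G"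
  shows "sweep_inv V0 e h (V(h := sweep_V V0 h Qh),
           (\<lambda>s t. if t = h then sweep_pol V0 pi0 h Qh s else pol s t), Q(h := Qh))"
proof -
  have V0_le: "V0 (Suc h) s' \<le> V (Suc h) s'" for s'
    by (rule sweep_inv_ge_reference[OF V0 inv]) simp
  have Qh: "r h s a + pexp (P h s a) (V (Suc h)) - e (s,a,h) \<le> Qh s a"
    "Qh s a \<le> r h s a + pexp (P h s a) (V (Suc h))" for s a
    unfolding Qh_def
    by (rule sweep_Q_bounds[where d = d, OF V0 h inv]; use x[of s a] e G in simp)+
  have "sub_bellman P r H (\<lambda>s t. if t = h then sweep_pol V0 pi0 h Qh s else pol s t) h
      (V(h := sweep_V V0 h Qh))"
  proof (rule sub_bellman_update[OF _ h])
    show "sub_bellman P r H pol (Suc h) V" using inv by simp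
    show "sweep_V V0 h Qh s \<le> r h s (sweep_pol V0 pi0 h Qh s)
        + pexp (P h s (sweep_pol V0 pi0 h Qh s)) (V (Suc h))" for s
      using V0 h V0_le Qh(2) unfolding good_reference_def sub_bellman_def
      by (intro sweep_V_le_bellman) auto
  qed
  moreover have "V0 t s \<le> (V(h := sweep_V V0 h Qh)) t s \<and> (Q(h := Qh)) t s a \<le> (V(h := sweep_V V0 h Qh)) t s
      \<and> r t s a + pexp (P t s a) ((V(h := sweep_V V0 h Qh)) (Suc t)) - e (s,a,t) \<le> (Q(h := Qh)) t s a
      \<and> (Q(h := Qh)) t s a \<le> r t s a + pexp (P t s a) ((V(h := sweep_V V0 h Qh)) (Suc t))"
    if t: "h \<le> t" "t < H" for t s a
  proof (cases "t = h")
    case True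
    then show ?thesis using Qh[of s a] by (simp add: sweep_V_ge)
  next
    case False
    then show ?thesis using inv t by simp
  qed
  ultimately show ?thesis by simp
qed

lemma sweep_increment_bounds:
  assumes V0: "good_reference k V0 pi0" and inv: "sweep_inv V0 e (Suc h) (V, pol, Q)"
  shows "0 \<le> V (Suc h) s - V0 (Suc h) s \<and> V (Suc h) s - V0 (Suc h) s \<le> 2 * eps_k k"
proof -
  have "V0 (Suc h) s \<le> V (Suc h) s" by (rule sweep_inv_ge_reference[OF V0 inv]) simp
  moreover have "V (Suc h) s \<le> Vpi P r H pol (Suc h) s"
    using inv by (intro sub_bellman_le_Vpi[of P r H pol "Suc h"]) auto
  then have "V (Suc h) s \<le> Vstar P r H (Suc h) s"
    using Vpi_le_Vstar order_trans by blast
  moreover have "0 \<le> eps_k k" by simp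
  ultimately show ?thesis using good_reference_bounds(4)[OF V0, of "Suc h" s] by linarith
qed

lemma sweep_step_failure_le:
  assumes V0: "good_reference k V0 pi0" and h: "h < H"
    and inv: "sweep_inv V0 e (Suc h) (V, pol, Q)"
    and x: "\<And>s a. pexp (P h s a) (V0 (Suc h)) - d (s,a,h) \<le> x (s,a,h)
                   \<and> x (s,a,h) \<le> pexp (P h s a) (V0 (Suc h))"
    and e: "\<And>s a. e (s,a,h) = d (s,a,h) + 2 * (qvi_c * eps_k k / real H)"
    and \<zeta>: "0 < \<zeta>"
  shows "measure_pmf.prob (qvi_step qme1 P r H (eps_k k) \<zeta> V0 pi0 x h (V, pol, Q))
           {st. \<not> sweep_inv V0 e h st} \<le> real CARD('s \<times> 'a) * \<zeta>"
proof -
  define f where "f = (\<lambda>s'. V (Suc h) s' - V0 (Suc h) s')"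
  define \<eta> where "\<eta> = qvi_c * eps_k k / real H"
  have \<eta>: "0 < \<eta>" unfolding \<eta>_def qvi_c_eq using H_ge_1 by simp
  have f: "0 \<le> f s' \<and> f s' \<le> 2 * eps_k k" for s'
    unfolding f_def by (rule sweep_increment_bounds[OF V0 inv])
  have "measure_pmf.prob (Pi_pmf UNIV 0 (\<lambda>(s,a). qme1 (P h s a) f (2 * eps_k k) \<eta> \<zeta>))
      {G. \<not> (\<forall>i\<in>UNIV. \<bar>G i - pexp (P h (fst i) (snd i)) f\<bar> < \<eta>)} \<le> real (card (UNIV :: ('s \<times> 'a) set)) * \<zeta>"
  proof (rule prob_Pi_pmf_failure_le)
    fix i :: "'s \<times> 'a"
    show "measure_pmf.prob ((\<lambda>(s,a). qme1 (P h s a) f (2 * eps_k k) \<eta> \<zeta>) i)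
        {e. \<not> \<bar>e - pexp (P h (fst i) (snd i)) f\<bar> < \<eta>} \<le> \<zeta>"
      using QME1_failure_le[OF qme1 f \<eta> \<zeta>] by (simp add: case_prod_beta)
  qed simp
  then show ?thesis
    unfolding qvi_step_eq f_def[symmetric] \<eta>_def[symmetric]
  proof (rule prob_bind_failure_le[where b = 0, simplified])
    fix G assume "\<forall>i\<in>UNIV. \<bar>G i - pexp (P h (fst i) (snd i)) f\<bar> < \<eta>"
    then have "sweep_inv V0 e h (V(h := sweep_V V0 h (sweep_Q r H (eps_k k) x h G)),
        (\<lambda>s t. if t = h then sweep_pol V0 pi0 h (sweep_Q r H (eps_k k) x h G) s else pol s t),
        Q(h := sweep_Q r H (eps_k k) x h G))"
      unfolding f_def \<eta>_def by (intro sweep_inv_step[OF V0 h inv x e]) auto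
    then show "measure_pmf.prob (return_pmf (V(h := sweep_V V0 h (sweep_Q r H (eps_k k) x h G)),
        (\<lambda>s t. if t = h then sweep_pol V0 pi0 h (sweep_Q r H (eps_k k) x h G) s else pol s t),
        Q(h := sweep_Q r H (eps_k k) x h G))) {st. \<not> sweep_inv V0 e h st} \<le> 0"
      by (simp add: prob_return_failure)
  qed
qed

lemma sweep_failure_le:
  assumes V0: "good_reference k V0 pi0"
    and x: "\<And>s a t. t < H \<Longrightarrow> pexp (P t s a) (V0 (Suc t)) - d (s,a,t) \<le> x (s,a,t)
                   \<and> x (s,a,t) \<le> pexp (P t s a) (V0 (Suc t))"
    and e: "\<And>s a t. e (s,a,t) = d (s,a,t) + 2 * (qvi_c * eps_k k / real H)"
    and \<zeta>: "0 < \<zeta>"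
  shows "measure_pmf.prob (foldl (\<lambda>M h. M \<bind> qvi_step qme1 P r H (eps_k k) \<zeta> V0 pi0 x h)
            (return_pmf ((\<lambda>_ _. 0), pi0, (\<lambda>_ _ _. 0))) (rev [0..<H]))
           {st. \<not> sweep_inv V0 e 0 st} \<le> real (CARD('s) * CARD('a) * H) * \<zeta>"
proof -
  have "measure_pmf.prob (foldl (\<lambda>M h. M \<bind> qvi_step qme1 P r H (eps_k k) \<zeta> V0 pi0 x h)
            (return_pmf ((\<lambda>_ _. 0), pi0, (\<lambda>_ _ _. 0))) (rev [0..<H]))
           {st. \<not> sweep_inv V0 e (H - length (rev [0..<H])) st}
        \<le> real (length (rev [0..<H])) * (real CARD('s \<times> 'a) * \<zeta>)"
  proof (rule prob_foldl_bind_failure_le)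
    fix j and st :: "('s, 'a) qstate"
    assume j: "j < length (rev [0..<H])" and inv: "sweep_inv V0 e (H - j) st"
    obtain V pol Q where st: "st = (V, pol, Q)" by (cases st)
    have h: "rev [0..<H] ! j = H - Suc j" "Suc (H - Suc j) = H - j" using j by (auto simp: rev_nth)
    show "measure_pmf.prob (qvi_step qme1 P r H (eps_k k) \<zeta> V0 pi0 x (rev [0..<H] ! j) st)
        {y. \<not> sweep_inv V0 e (H - Suc j) y} \<le> real CARD('s \<times> 'a) * \<zeta>"
      unfolding st h(1)
      by (rule sweep_step_failure_le[OF V0 _ _ x e \<zeta>]) (use j inv st h(2) in auto)
  qed (use \<zeta> in \<open>simp_all add: sub_bellman_def\<close>)
  then show ?thesis by (simp add: algebra_simps)
qed

definition y_est :: "('s \<times> 'a \<times> nat \<Rightarrow> real) \<Rightarrow> ('s \<times> 'a \<times> nat \<Rightarrow> real) \<Rightarrow> 's \<times> 'a \<times> nat \<Rightarrow> real" where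
  "y_est E2 E1 i = max (E2 i - (E1 i)\<^sup>2) 0"

definition eta_est :: "('s \<times> 'a \<times> nat \<Rightarrow> real) \<Rightarrow> ('s \<times> 'a \<times> nat \<Rightarrow> real) \<Rightarrow> 's \<times> 'a \<times> nat \<Rightarrow> real" where
  "eta_est E2 E1 i = qvi_c * \<epsilon> * real H powr (-1.5) * sqrt (y_est E2 E1 i + 4 * qvi_b)"

lemma qvi_iter_eq:
  "qvi_iter qme1 qme2 P r H \<epsilon> \<zeta> k (V0, pi0, Q0) =
   Pi_pmf (UNIV \<times> UNIV \<times> {..<H}) 0
     (\<lambda>(s,a,h). qme1 (P h s a) (\<lambda>s'. (V0 (Suc h) s')\<^sup>2) ((real H)\<^sup>2) qvi_b \<zeta>) \<bind>
   (\<lambda>E2. Pi_pmf (UNIV \<times> UNIV \<times> {..<H}) 0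
     (\<lambda>(s,a,h). qme1 (P h s a) (V0 (Suc h)) (real H) (qvi_b / real H) \<zeta>) \<bind>
   (\<lambda>E1. Pi_pmf (UNIV \<times> UNIV \<times> {..<H}) 0
     (\<lambda>(s,a,h). qme2 (P h s a) (V0 (Suc h)) (sqrt (y_est E2 E1 (s,a,h) + 4 * qvi_b))
        (eta_est E2 E1 (s,a,h)) \<zeta>) \<bind>
   (\<lambda>X. foldl (\<lambda>M h. M \<bind> qvi_step qme1 P r H (eps_k k) \<zeta> V0 pi0 (\<lambda>i. X i - eta_est E2 E1 i) h)
          (return_pmf ((\<lambda>_ _. 0), pi0, (\<lambda>_ _ _. 0))) (rev [0..<H]))))"
  unfolding qvi_iter_def Let_def y_est_def eta_est_def prod.case ..

definition good_sq_means :: "(nat \<Rightarrow> 's \<Rightarrow> real) \<Rightarrow> ('s \<times> 'a \<times> nat \<Rightarrow> real) \<Rightarrow> bool" where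
  "good_sq_means V0 E2 \<longleftrightarrow>
     (\<forall>s a t. t < H \<longrightarrow> \<bar>E2 (s,a,t) - pexp (P t s a) (\<lambda>s'. (V0 (Suc t) s')\<^sup>2)\<bar> < qvi_b)"

definition good_means :: "(nat \<Rightarrow> 's \<Rightarrow> real) \<Rightarrow> ('s \<times> 'a \<times> nat \<Rightarrow> real) \<Rightarrow> bool" where
  "good_means V0 E1 \<longleftrightarrow>
     (\<forall>s a t. t < H \<longrightarrow> \<bar>E1 (s,a,t) - pexp (P t s a) (V0 (Suc t))\<bar> < qvi_b / real H)"

definition good_refs :: "(nat \<Rightarrow> 's \<Rightarrow> real) \<Rightarrow> ('s \<times> 'a \<times> nat \<Rightarrow> real) \<Rightarrow> ('s \<times> 'a \<times> nat \<Rightarrow> real)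
    \<Rightarrow> ('s \<times> 'a \<times> nat \<Rightarrow> real) \<Rightarrow> bool" where
  "good_refs V0 E2 E1 X \<longleftrightarrow>
     (\<forall>s a t. t < H \<longrightarrow> \<bar>X (s,a,t) - pexp (P t s a) (V0 (Suc t))\<bar> < eta_est E2 E1 (s,a,t))"

lemma pvar_reference_le:
  assumes "good_reference k V0 pi0"
  shows "pvar p (V0 t) \<le> 2 * pvar p (Vstar P r H t) + 2 * (eps_k k)\<^sup>2"
proof -
  define g where "g = (\<lambda>x. V0 t x - Vstar P r H t x)"
  have "pvar p g \<le> (eps_k k)\<^sup>2"
  proof -
    have "\<bar>g x\<bar> \<le> eps_k k" for x
      using good_reference_bounds(3,4)[OF assms, of t x] unfolding g_def by simp
    then have "(g x)\<^sup>2 \<le> (eps_k k)\<^sup>2" for x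
      by (metis abs_ge_zero power2_abs power_mono)
    then have "pexp p (\<lambda>x. (g x)\<^sup>2) \<le> (eps_k k)\<^sup>2" by (rule pexp_le_const)
    then show ?thesis using pvar_le_pexp_square[of p g] by linarith
  qed
  moreover have "pvar p (V0 t) = pvar p (\<lambda>x. Vstar P r H t x + g x)" unfolding g_def by simp
  ultimately show ?thesis using pvar_add_le[of p "Vstar P r H t" g] by linarith
qed

lemma y_est_bounds:
  assumes V0: "good_reference k V0 pi0" and "good_sq_means V0 E2" "good_means V0 E1" "t < H"
  shows "pvar (P t s a) (V0 (Suc t)) \<le> y_est E2 E1 (s,a,t) + 4"
    and "y_est E2 E1 (s,a,t) \<le> pvar (P t s a) (V0 (Suc t)) + 4"
proof -
  have "0 \<le> V0 (Suc t) s' \<and> V0 (Suc t) s' \<le> real H" for s'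
    using good_reference_bounds(1)[OF V0] good_reference_le_H[OF V0] by blast
  then have "0 \<le> pexp (P t s a) (V0 (Suc t))" "pexp (P t s a) (V0 (Suc t)) \<le> real H"
    by (auto intro: pexp_nonneg pexp_le_const)
  then have "\<bar>(E2 (s,a,t) - (E1 (s,a,t))\<^sup>2) - pvar (P t s a) (V0 (Suc t))\<bar> < 4"
    using variance_estimate_error[OF _ _ H_ge_1] assms(2-4)
    unfolding good_sq_means_def good_means_def qvi_b_def pvar_eq by simp
  then show "pvar (P t s a) (V0 (Suc t)) \<le> y_est E2 E1 (s,a,t) + 4"
    and "y_est E2 E1 (s,a,t) \<le> pvar (P t s a) (V0 (Suc t)) + 4"
    using pvar_nonneg[of "P t s a" "V0 (Suc t)"] unfolding y_est_def by auto
qed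

lemma eta_est_eq: "eta_est E2 E1 i = qvi_c * \<epsilon> / (real H * sqrt (real H)) * sqrt (y_est E2 E1 i + 4)"
  using H_ge_1 unfolding eta_est_def by (subst powr_minus_three_halves) (auto simp: qvi_b_def)

lemma eta_est_bounds: "0 < eta_est E2 E1 i" "eta_est E2 E1 i < 4 * sqrt (y_est E2 E1 i + 4 * qvi_b)"
proof -
  have y: "0 < sqrt (y_est E2 E1 i + 4)" by (simp add: y_est_def)
  have "\<epsilon> \<le> real H * sqrt (real H)"
    using eps_le mult_right_mono[OF H_ge_1, of "sqrt (real H)"] by simp
  then have "qvi_c * \<epsilon> / (real H * sqrt (real H)) \<le> qvi_c"
    using H_ge_1 by (simp add: qvi_c_eq divide_le_eq)
  then have "eta_est E2 E1 i \<le> qvi_c * sqrt (y_est E2 E1 i + 4)"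
    unfolding eta_est_eq using y by (intro mult_right_mono) auto
  moreover have "qvi_c * sqrt (y_est E2 E1 i + 4) < 4 * sqrt (y_est E2 E1 i + 4 * qvi_b)"
    using y by (simp add: qvi_c_eq qvi_b_def)
  ultimately show "eta_est E2 E1 i < 4 * sqrt (y_est E2 E1 i + 4 * qvi_b)" by linarith
  show "0 < eta_est E2 E1 i"
    unfolding eta_est_eq using y eps_pos H_ge_1 by (simp add: qvi_c_eq)
qed

definition err_bound :: "nat \<Rightarrow> nat \<Rightarrow> 's \<Rightarrow> 'a \<Rightarrow> real" where
  "err_bound k t s a = 2 * (qvi_c * \<epsilon> / (real H * sqrt (real H))
       * (2 * sqrt (pvar (P t s a) (Vstar P r H (Suc t))) + 2 * eps_k k + 3))
     + 2 * (qvi_c * eps_k k / real H)"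

lemma sweep_error_le_err_bound:
  assumes V0: "good_reference k V0 pi0" and "good_sq_means V0 E2" "good_means V0 E1" "t < H"
  shows "2 * eta_est E2 E1 (s,a,t) + 2 * (qvi_c * eps_k k / real H) \<le> err_bound k t s a"
proof -
  define v where "v = pvar (P t s a) (Vstar P r H (Suc t))"
  have "y_est E2 E1 (s,a,t) + 4 \<le> 4 * v + 4 * (eps_k k)\<^sup>2 + 9"
    using y_est_bounds(2)[OF assms, of s a] pvar_reference_le[OF V0, of "P t s a" "Suc t"]
      pvar_nonneg[of "P t s a" "Vstar P r H (Suc t)"] zero_le_power2[of "eps_k k"]
    unfolding v_def by linarith
  then have "sqrt (y_est E2 E1 (s,a,t) + 4) \<le> sqrt (4 * v + 4 * (eps_k k)\<^sup>2 + 9)" by simp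
  also have "\<dots> \<le> sqrt (4 * v) + sqrt (4 * (eps_k k)\<^sup>2) + sqrt 9"
    by (rule sqrt_add3_le) (auto simp: v_def pvar_nonneg)
  also have "\<dots> = 2 * sqrt v + 2 * eps_k k + 3"
    using real_sqrt_unique[of 3 9] by (simp add: real_sqrt_mult)
  finally have "eta_est E2 E1 (s,a,t)
      \<le> qvi_c * \<epsilon> / (real H * sqrt (real H)) * (2 * sqrt v + 2 * eps_k k + 3)"
    unfolding eta_est_eq using eps_pos by (intro mult_left_mono) (auto simp: qvi_c_eq)
  then show ?thesis unfolding err_bound_def v_def by linarith
qed

lemma err_bound_le:
  assumes "t < H"
  shows "err_bound k t s a \<le> 14 * qvi_c * \<epsilon> + 4 * qvi_c * eps_k (Suc k)"
proof -
  have "pexp (P t s a) (\<lambda>s'. (Vstar P r H (Suc t) s')\<^sup>2) \<le> (real H)\<^sup>2"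
    using Vstar_bounds[of "Suc t"] Vstar_le_H[of "Suc t"] by (intro pexp_le_const power_mono) auto
  then have "sqrt (pvar (P t s a) (Vstar P r H (Suc t))) \<le> real H"
    using pvar_le_pexp_square[of "P t s a" "Vstar P r H (Suc t)"] by (intro real_le_lsqrt) auto
  moreover note eps_k_le_H[of k]
  ultimately have "2 * sqrt (pvar (P t s a) (Vstar P r H (Suc t))) + 2 * eps_k k + 3 \<le> 7 * real H"
    using H_ge_1 by linarith
  then have "qvi_c * \<epsilon> / (real H * sqrt (real H))
       * (2 * sqrt (pvar (P t s a) (Vstar P r H (Suc t))) + 2 * eps_k k + 3)
      \<le> qvi_c * \<epsilon> / (real H * sqrt (real H)) * (7 * real H)"
    using eps_pos by (intro mult_left_mono) (auto simp: qvi_c_eq)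
  also have "\<dots> = 7 * (qvi_c * \<epsilon>) / sqrt (real H)" using H_ge_1 by simp
  also have "\<dots> \<le> 7 * (qvi_c * \<epsilon>)"
    using H_ge_1 eps_pos by (simp add: qvi_c_eq divide_le_eq)
  moreover have "qvi_c * eps_k k / real H \<le> 2 * (qvi_c * eps_k (Suc k))"
    using H_ge_1 by (simp add: qvi_c_eq field_simps)
  ultimately show ?thesis unfolding err_bound_def by linarith
qed

lemma pol_value_err_bound_le:
  assumes eps: "\<epsilon> \<le> 2 * eps_k k"
  shows "pol_value P H pistar (\<lambda>t s. err_bound k t s (pistar s t)) t s \<le> eps_k k / 2"
proof -
  define A where "A = qvi_c * \<epsilon> / (real H * sqrt (real H))"
  define C where "C = 2 * (A * (2 * eps_k k + 3)) + 2 * (qvi_c * eps_k k / real H)"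
  define w where "w = \<epsilon> / sqrt (real H)"
  have A: "0 \<le> A" and C: "0 \<le> C" unfolding A_def C_def using eps_pos by (auto simp: qvi_c_eq)
  have "err_bound k t s (pistar s t) = (4 * A) * sqrt (opt_variance t s) + C" for t s
    unfolding err_bound_def opt_variance_def A_def C_def by (simp add: algebra_simps)
  then have "pol_value P H pistar (\<lambda>t s. err_bound k t s (pistar s t)) t s
      = (4 * A) * pol_value P H pistar (\<lambda>t s. sqrt (opt_variance t s)) t s + real (H - t) * C"
    using pol_value_affine[of P H pistar "4 * A" "\<lambda>t s. sqrt (opt_variance t s)" C t s] by simp
  also have "\<dots> \<le> (4 * A) * (real H * sqrt (real H)) + real H * C"
    using A C pol_value_sqrt_opt_variance_le_H[of t s] by (intro add_mono mult_left_mono mult_right_mono) auto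
  also have "\<dots> = 4 * qvi_c * \<epsilon> + 4 * qvi_c * (w * eps_k k) + 6 * qvi_c * w + 2 * qvi_c * eps_k k"
    using H_ge_1 unfolding A_def C_def w_def by (simp add: field_simps)
  also have "\<dots> \<le> eps_k k / 2"
  proof (rule error_budget_le)
    show "w \<le> 1" using eps_le H_ge_1 unfolding w_def by simp
    show "w \<le> \<epsilon>" using eps_pos H_ge_1 unfolding w_def by (simp add: divide_le_eq)
    show "0 \<le> w" using eps_pos unfolding w_def by simp
  qed (rule eps)
  finally show ?thesis .
qed

lemma Vstar_minus_le_pol_value_error:
  assumes inv: "sweep_inv V0 e 0 (V, pol, Q)"
  shows "Vstar P r H t s - V t s \<le> pol_value P H pistar (\<lambda>t s. e (s, pistar s t, t)) t s"
proof (rule pol_value_ge_subsolution[of 0 H "\<lambda>t s. Vstar P r H t s - V t s"])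
  fix t s assume t: "0 \<le> t" "t < H"
  have "r t s (pistar s t) + pexp (P t s (pistar s t)) (V (Suc t)) - e (s, pistar s t, t) \<le> V t s"
    using inv t by (auto intro: order_trans)
  then show "Vstar P r H t s - V t s
      \<le> e (s, pistar s t, t) + pexp (P t s (pistar s t)) (\<lambda>s. Vstar P r H (Suc t) s - V (Suc t) s)"
    using Vstar_step[OF t(2)] by (simp add: pexp_diff)
next
  fix t s assume "H \<le> t"
  then show "Vstar P r H t s - V t s \<le> 0" using inv by (simp add: sub_bellman_def)
qed simp

fun iter_inv :: "nat \<Rightarrow> ('s,'a) qstate \<Rightarrow> bool" where
  "iter_inv n (V, pol, Q) \<longleftrightarrow> good_reference n V pol \<and>
     (\<forall>t s a. t < H \<longrightarrow> Q t s a \<le> r t s a + pexp (P t s a) (V (Suc t)) \<and>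
        Qstar P r H t s a - Q t s a \<le> (1 + 4 * qvi_c) * eps_k n + 14 * qvi_c * \<epsilon>)"

lemma iter_inv_init: "iter_inv 0 ((\<lambda>_ _. 0), pol, (\<lambda>_ _ _. 0))"
proof -
  have "good_reference 0 (\<lambda>_ _. 0) pol"
    using reward_bounds Vstar_le_H by (simp add: good_reference_def sub_bellman_def)
  moreover have "Qstar P r H t s a \<le> (1 + 4 * qvi_c) * eps_k 0 + 14 * qvi_c * \<epsilon>"
    if "t < H" for t s a
  proof -
    have "Qstar P r H t s a \<le> Vstar P r H t s" using that by (rule Qstar_le_Vstar)
    then show ?thesis using Vstar_le_H[of t s] eps_pos unfolding qvi_c_eq by simp
  qed
  ultimately show ?thesis using reward_bounds by simp
qed

lemma iter_inv_of_sweep_inv: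
  assumes V0: "good_reference k V0 pi0" and k: "k < qvi_K H \<epsilon>"
    and inv: "sweep_inv V0 e 0 (V, pol, Q)"
    and e: "\<And>s a t. t < H \<Longrightarrow> e (s,a,t) \<le> err_bound k t s a"
  shows "iter_inv (Suc k) (V, pol, Q)"
proof -
  have gap: "Vstar P r H t s - V t s \<le> eps_k (Suc k)" for t s
  proof -
    have "Vstar P r H t s - V t s \<le> pol_value P H pistar (\<lambda>t s. e (s, pistar s t, t)) t s"
      by (rule Vstar_minus_le_pol_value_error[OF inv])
    also have "\<dots> \<le> pol_value P H pistar (\<lambda>t s. err_bound k t s (pistar s t)) t s"
      by (rule pol_value_mono) (rule e)
    also have "\<dots> \<le> eps_k k / 2"
      by (rule pol_value_err_bound_le[OF eps_k_bounds(1)[OF k]])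
    finally show ?thesis by simp
  qed
  have "0 \<le> V t s" for t s
    using inv good_reference_bounds(1)[OF V0, of t s] sweep_inv_ge_reference[OF V0 inv, of t s]
    by simp
  then have good: "good_reference (Suc k) V pol"
    using inv gap unfolding good_reference_def by simp
  have "Qstar P r H t s a - Q t s a \<le> (1 + 4 * qvi_c) * eps_k (Suc k) + 14 * qvi_c * \<epsilon>"
    if t: "t < H" for t s a
  proof -
    have "pexp (P t s a) (\<lambda>s'. Vstar P r H (Suc t) s' - V (Suc t) s') \<le> eps_k (Suc k)"
      using gap by (intro pexp_le_const)
    then have "Qstar P r H t s a - (r t s a + pexp (P t s a) (V (Suc t))) \<le> eps_k (Suc k)"
      by (simp add: Qstar_eq pexp_diff)
    moreover have "r t s a + pexp (P t s a) (V (Suc t)) - e (s,a,t) \<le> Q t s a"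
      using inv t by simp
    ultimately show ?thesis
      using e[OF t, of s a] err_bound_le[OF t, of k s a] unfolding qvi_c_eq distrib_right by linarith
  qed
  then show ?thesis using good inv by simp
qed

lemma iter_inv_final:
  assumes inv: "iter_inv (qvi_K H \<epsilon>) st"
  shows "st \<in> {(V, pol, Q). \<forall>h<H. \<forall>s.
      Vstar P r H h s - \<epsilon> \<le> V h s \<and> V h s \<le> Vpi P r H pol h s \<and> Vpi P r H pol h s \<le> Vstar P r H h s
      \<and> (\<forall>a. Qstar P r H h s a - \<epsilon> \<le> Q h s a \<and> Q h s a \<le> Qpi P r H pol h s a
             \<and> Qpi P r H pol h s a \<le> Qstar P r H h s a)}"
proof -
  obtain V pol Q where st: "st = (V, pol, Q)" by (cases st)
  have good: "good_reference (qvi_K H \<epsilon>) V pol" using inv unfolding st by simp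
  have K: "eps_k (qvi_K H \<epsilon>) \<le> \<epsilon> / 2" by (rule eps_k_bounds(2))
  have "Q h s a \<le> Qpi P r H pol h s a" if h: "h < H" for h s a
  proof -
    have "pexp (P h s a) (V (Suc h)) \<le> pexp (P h s a) (Vpi P r H pol (Suc h))"
      by (intro pexp_mono good_reference_bounds(2)[OF good])
    moreover have "Q h s a \<le> r h s a + pexp (P h s a) (V (Suc h))" using inv h unfolding st by simp
    ultimately show ?thesis by (simp add: Qpi_eq)
  qed
  moreover have "Qstar P r H h s a - \<epsilon> \<le> Q h s a" if h: "h < H" for h s a
  proof -
    have "Qstar P r H h s a - Q h s a \<le> (1 + 4 * qvi_c) * eps_k (qvi_K H \<epsilon>) + 14 * qvi_c * \<epsilon>"
      using inv h unfolding st by simp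
    then show ?thesis using K eps_pos unfolding qvi_c_eq distrib_right by linarith
  qed
  moreover have "Vstar P r H h s - \<epsilon> \<le> V h s" for h s
    using good_reference_bounds(4)[OF good, of h s] K eps_pos by linarith
  ultimately show ?thesis
    unfolding st using good_reference_bounds(2)[OF good] by (simp add: Vpi_le_Vstar Qpi_le_Qstar)
qed

lemma sq_means_failure_le:
  assumes V0: "good_reference k V0 pi0" and \<zeta>: "0 < \<zeta>"
  shows "measure_pmf.prob (Pi_pmf (UNIV \<times> UNIV \<times> {..<H}) 0
      (\<lambda>(s,a,h). qme1 (P h s a) (\<lambda>s'. (V0 (Suc h) s')\<^sup>2) ((real H)\<^sup>2) qvi_b \<zeta>))
      {E2. \<not> good_sq_means V0 E2} \<le> real (CARD('s) * CARD('a) * H) * \<zeta>"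
  unfolding good_sq_means_def
proof (rule prob_Pi_pmf_horizon_failure_le[where
      G = "\<lambda>s a t e. \<bar>e - pexp (P t s a) (\<lambda>s'. (V0 (Suc t) s')\<^sup>2)\<bar> < qvi_b"])
  fix s a t
  have "0 \<le> (V0 (Suc t) s')\<^sup>2 \<and> (V0 (Suc t) s')\<^sup>2 \<le> (real H)\<^sup>2" for s'
    using good_reference_bounds(1)[OF V0] good_reference_le_H[OF V0] by (auto intro: power_mono)
  then show "measure_pmf.prob ((\<lambda>(s,a,h). qme1 (P h s a) (\<lambda>s'. (V0 (Suc h) s')\<^sup>2) ((real H)\<^sup>2) qvi_b \<zeta>)
      (s,a,t)) {e. \<not> \<bar>e - pexp (P t s a) (\<lambda>s'. (V0 (Suc t) s')\<^sup>2)\<bar> < qvi_b} \<le> \<zeta>"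
    using QME1_failure_le[OF qme1 _ _ \<zeta>] by (simp add: qvi_b_def)
qed

lemma means_failure_le:
  assumes V0: "good_reference k V0 pi0" and \<zeta>: "0 < \<zeta>"
  shows "measure_pmf.prob (Pi_pmf (UNIV \<times> UNIV \<times> {..<H}) 0
      (\<lambda>(s,a,h). qme1 (P h s a) (V0 (Suc h)) (real H) (qvi_b / real H) \<zeta>))
      {E1. \<not> good_means V0 E1} \<le> real (CARD('s) * CARD('a) * H) * \<zeta>"
  unfolding good_means_def
proof (rule prob_Pi_pmf_horizon_failure_le[where
      G = "\<lambda>s a t e. \<bar>e - pexp (P t s a) (V0 (Suc t))\<bar> < qvi_b / real H"])
  fix s a t
  have "0 \<le> V0 (Suc t) s' \<and> V0 (Suc t) s' \<le> real H" for s'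
    using good_reference_bounds(1)[OF V0] good_reference_le_H[OF V0] by blast
  moreover have "0 < qvi_b / real H" using H_ge_1 by (simp add: qvi_b_def)
  ultimately show "measure_pmf.prob ((\<lambda>(s,a,h). qme1 (P h s a) (V0 (Suc h)) (real H) (qvi_b / real H) \<zeta>)
      (s,a,t)) {e. \<not> \<bar>e - pexp (P t s a) (V0 (Suc t))\<bar> < qvi_b / real H} \<le> \<zeta>"
    using QME1_failure_le[OF qme1 _ _ \<zeta>] by simp
qed

lemma refs_failure_le:
  assumes V0: "good_reference k V0 pi0" and \<zeta>: "0 < \<zeta>"
    and E: "good_sq_means V0 E2" "good_means V0 E1"
  shows "measure_pmf.prob (Pi_pmf (UNIV \<times> UNIV \<times> {..<H}) 0
      (\<lambda>(s,a,h). qme2 (P h s a) (V0 (Suc h)) (sqrt (y_est E2 E1 (s,a,h) + 4 * qvi_b))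
         (eta_est E2 E1 (s,a,h)) \<zeta>))
      {X. \<not> good_refs V0 E2 E1 X} \<le> real (CARD('s) * CARD('a) * H) * \<zeta>"
  unfolding good_refs_def
proof (rule prob_Pi_pmf_horizon_failure_le[where
      G = "\<lambda>s a t e. \<bar>e - pexp (P t s a) (V0 (Suc t))\<bar> < eta_est E2 E1 (s,a,t)"], goal_cases)
  case (1 s a t)
  have "pvar (P t s a) (V0 (Suc t)) \<le> (sqrt (y_est E2 E1 (s,a,t) + 4 * qvi_b))\<^sup>2"
    using y_est_bounds(1)[OF V0 E 1] by (simp add: qvi_b_def y_est_def)
  from QME2_failure_le[OF qme2 this eta_est_bounds \<zeta>] show ?case
    by simp
qed

lemma sweep_iter_inv_failure_le:
  assumes V0: "good_reference k V0 pi0" and k: "k < qvi_K H \<epsilon>" and \<zeta>: "0 < \<zeta>"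
    and E: "good_sq_means V0 E2" "good_means V0 E1" and X: "good_refs V0 E2 E1 X"
  shows "measure_pmf.prob (foldl (\<lambda>M h. M \<bind> qvi_step qme1 P r H (eps_k k) \<zeta> V0 pi0
        (\<lambda>i. X i - eta_est E2 E1 i) h) (return_pmf ((\<lambda>_ _. 0), pi0, (\<lambda>_ _ _. 0))) (rev [0..<H]))
      {st. \<not> iter_inv (Suc k) st} \<le> real (CARD('s) * CARD('a) * H) * \<zeta>"
proof -
  define e where "e = (\<lambda>i. 2 * eta_est E2 E1 i + 2 * (qvi_c * eps_k k / real H))"
  have "iter_inv (Suc k) st" if "sweep_inv V0 e 0 st" for st
  proof -
    obtain V pol Q where st: "st = (V, pol, Q)" by (cases st)
    have "e (s,a,t) \<le> err_bound k t s a" if "t < H" for s a t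
      unfolding e_def by (rule sweep_error_le_err_bound[OF V0 E that])
    with that show ?thesis unfolding st by (rule iter_inv_of_sweep_inv[OF V0 k])
  qed
  then have sub: "{st. \<not> iter_inv (Suc k) st} \<subseteq> {st. \<not> sweep_inv V0 e 0 st}" by blast
  have x: "pexp (P t s a) (V0 (Suc t)) - 2 * eta_est E2 E1 (s,a,t) \<le> X (s,a,t) - eta_est E2 E1 (s,a,t)
      \<and> X (s,a,t) - eta_est E2 E1 (s,a,t) \<le> pexp (P t s a) (V0 (Suc t))" if "t < H" for s a t
  proof -
    have "\<bar>X (s,a,t) - pexp (P t s a) (V0 (Suc t))\<bar> < eta_est E2 E1 (s,a,t)"
      using X that unfolding good_refs_def by blast
    then show ?thesis by (simp add: abs_less_iff)
  qed
  show ?thesis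
    using order.trans[OF measure_pmf.finite_measure_mono[OF sub] sweep_failure_le[OF V0 x _ \<zeta>]]
    by (simp add: e_def)
qed

lemma qvi_iter_failure_le:
  assumes V0: "good_reference k V0 pi0" and k: "k < qvi_K H \<epsilon>" and \<zeta>: "0 < \<zeta>"
  shows "measure_pmf.prob (qvi_iter qme1 qme2 P r H \<epsilon> \<zeta> k (V0, pi0, Q0)) {st. \<not> iter_inv (Suc k) st}
           \<le> 4 * (real (CARD('s) * CARD('a) * H) * \<zeta>)"
proof -
  let ?N = "real (CARD('s) * CARD('a) * H) * \<zeta>"
  have N: "0 \<le> ?N" using \<zeta> by simp
  have "measure_pmf.prob (qvi_iter qme1 qme2 P r H \<epsilon> \<zeta> k (V0, pi0, Q0)) {st. \<not> iter_inv (Suc k) st}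
      \<le> ?N + (?N + (?N + ?N))"
    unfolding qvi_iter_eq
  proof (rule prob_bind_failure_le[OF sq_means_failure_le[OF V0 \<zeta>]], goal_cases)
    case (1 E2)
    show ?case
    proof (rule prob_bind_failure_le[OF means_failure_le[OF V0 \<zeta>]], goal_cases)
      case (1 E1)
      show ?case
      proof (rule prob_bind_failure_le[OF refs_failure_le[OF V0 \<zeta> \<open>good_sq_means V0 E2\<close> \<open>good_means V0 E1\<close>]],
          goal_cases)
        case (1 X)
        then show ?case using sweep_iter_inv_failure_le[OF V0 k \<zeta>] \<open>good_sq_means V0 E2\<close>
            \<open>good_means V0 E1\<close> by blast
      qed (use N in linarith)
    qed (use N in linarith)
  qed (use N in linarith)
  then show ?thesis by linarith
qed

lemma QVI4_failure_le:
  assumes \<zeta>: "0 < \<zeta>"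
  shows "measure_pmf.prob (foldl (\<lambda>M k. M \<bind> qvi_iter qme1 qme2 P r H \<epsilon> \<zeta> k)
            (return_pmf ((\<lambda>_ _. 0), pi_init, (\<lambda>_ _ _. 0))) [0..<qvi_K H \<epsilon>])
           {st. \<not> iter_inv (qvi_K H \<epsilon>) st}
         \<le> real (qvi_K H \<epsilon>) * (4 * (real (CARD('s) * CARD('a) * H) * \<zeta>))"
proof -
  have "measure_pmf.prob (foldl (\<lambda>M k. M \<bind> qvi_iter qme1 qme2 P r H \<epsilon> \<zeta> k)
            (return_pmf ((\<lambda>_ _. 0), pi_init, (\<lambda>_ _ _. 0))) [0..<qvi_K H \<epsilon>])
           {st. \<not> iter_inv (length [0..<qvi_K H \<epsilon>]) st}
         \<le> real (length [0..<qvi_K H \<epsilon>]) * (4 * (real (CARD('s) * CARD('a) * H) * \<zeta>))"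
  proof (rule prob_foldl_bind_failure_le)
    fix j and st :: "('s, 'a) qstate"
    assume j: "j < length [0..<qvi_K H \<epsilon>]" and inv: "iter_inv j st"
    obtain V0 pi0 Q0 where st: "st = (V0, pi0, Q0)" by (cases st)
    show "measure_pmf.prob (qvi_iter qme1 qme2 P r H \<epsilon> \<zeta> ([0..<qvi_K H \<epsilon>] ! j) st)
        {y. \<not> iter_inv (Suc j) y} \<le> 4 * (real (CARD('s) * CARD('a) * H) * \<zeta>)"
    proof -
      have "good_reference j V0 pi0" using inv unfolding st by simp
      moreover have "j < qvi_K H \<epsilon>" "[0..<qvi_K H \<epsilon>] ! j = j" using j by simp_all
      ultimately show ?thesis unfolding st using qvi_iter_failure_le[OF _ _ \<zeta>] by simp
    qed
  qed (use \<zeta> iter_inv_init in simp_all)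
  then show ?thesis by simp
qed

lemma qvi_zeta_budget:
  assumes "0 < \<delta>"
  shows "0 < qvi_zeta TYPE('s) TYPE('a) H \<epsilon> \<delta>"
    and "real (qvi_K H \<epsilon>) * (4 * (real (CARD('s) * CARD('a) * H) * qvi_zeta TYPE('s) TYPE('a) H \<epsilon> \<delta>)) = \<delta>"
proof -
  have "0 < qvi_K H \<epsilon>" by (simp add: qvi_K_def)
  then have "0 < 4 * real (qvi_K H \<epsilon>) * real H * real CARD('s) * real CARD('a)"
    using H_ge_1 by simp
  then show "0 < qvi_zeta TYPE('s) TYPE('a) H \<epsilon> \<delta>"
    and "real (qvi_K H \<epsilon>) * (4 * (real (CARD('s) * CARD('a) * H) * qvi_zeta TYPE('s) TYPE('a) H \<epsilon> \<delta>)) = \<delta>"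
    using assms H_ge_1 \<open>0 < qvi_K H \<epsilon>\<close> by (simp_all add: qvi_zeta_def field_simps)
qed

end

theorem theorem4p5:
  fixes P :: "nat \<Rightarrow> 's::finite \<Rightarrow> 'a::finite \<Rightarrow> 's pmf"
    and r :: "nat \<Rightarrow> 's \<Rightarrow> 'a \<Rightarrow> real"
    and H :: nat and \<epsilon> \<delta> :: real
    and qme1 qme2 :: "'s qme"
    and pi_init :: "'s \<Rightarrow> nat \<Rightarrow> 'a"
  assumes rew: "\<And>h s a. h < H \<Longrightarrow> 0 \<le> r h s a \<and> r h s a \<le> 1"
    and eps: "0 < \<epsilon>" "\<epsilon> \<le> sqrt (real H)"
    and del: "0 < \<delta>" "\<delta> < 1"
    and q1: "QME1_spec qme1"
    and q2: "QME2_spec qme2"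
  shows "measure_pmf.prob (QVI4 qme1 qme2 P r H pi_init \<epsilon> \<delta>)
           {(V, pol, Q). \<forall>h<H. \<forall>s.
              Vstar P r H h s - \<epsilon> \<le> V h s \<and> V h s \<le> Vpi P r H pol h s
              \<and> Vpi P r H pol h s \<le> Vstar P r H h s
              \<and> (\<forall>a. Qstar P r H h s a - \<epsilon> \<le> Q h s a \<and> Q h s a \<le> Qpi P r H pol h s a
                     \<and> Qpi P r H pol h s a \<le> Qstar P r H h s a)}
         \<ge> 1 - \<delta>"
proof -
  interpret qvi4_analysis P r H \<epsilon> qme1 qme2
    using rew eps q1 q2 by unfold_locales auto
  have "measure_pmf.prob (QVI4 qme1 qme2 P r H pi_init \<epsilon> \<delta>) {st. \<not> iter_inv (qvi_K H \<epsilon>) st} \<le> \<delta>"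
    using QVI4_failure_le[OF qvi_zeta_budget(1)[OF del(1)], of pi_init] qvi_zeta_budget(2)[OF del(1)]
    unfolding QVI4_def Let_def by simp
  then have "1 - \<delta> \<le> measure_pmf.prob (QVI4 qme1 qme2 P r H pi_init \<epsilon> \<delta>) {st. iter_inv (qvi_K H \<epsilon>) st}"
    unfolding measure_pmf_prob_Collect_not by simp
  then show ?thesis
    by (rule order.trans[OF _ measure_pmf.finite_measure_mono]) (auto dest: iter_inv_final)
qed

end
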